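(* (Equivalence of CPL* natural deduction and the focused sequent calculus.) Fix a set $W$ of worlds with a converse well-founded accessibility relation $\prec$. For every (unpolarized) context $\Gamma$, proposition $A$ and world $w$: $\Gamma \vdash_{\mathbf{CPL*}} A[w]$ if and only if the inversion sequent $\Gamma^{\circledcirc}; \cdot \Longrightarrow A^{\ominus}[w]$ is derivable in the focused sequent calculus.
   Context: Fix a set $W$ of worlds and a binary relation $\prec$ on $W$ that is converse well-founded (no infinite chain $w_0\prec w_1\prec\cdots$); $\prec^*$ is its reflexive–transitive closure. Atomic propositions are each designated either positive ($Q^+$) or negative ($Q^-$). Unpolarized propositions: $A,B,C ::= Q \mid \bot \mid A\supset B \mid \Diamond A \mid \Box A$; an unpolarized context $\Gamma$ is a finite collection of judgments $A[w]$. Natural deduction $\Gamma \vdash_{\mathbf{CPL*}} A[w]$, defined one world at a time (provability at $w$ after provability at all worlds reachable from $w$ by one or more $\prec$-steps) as the least relation closed under: (hyp) $\Gamma, A[w]\vdash A[w]$; ($\bot E$) $w'\prec^* w$ and $\Gamma\vdash\bot[w]$ imply $\Gamma\vdash C[w']$; ($\supset I$) $\Gamma,A[w]\vdash B[w]$ implies $\Gamma\vdash A\supset B[w]$; ($\supset E$) $\Gamma\vdash A\supset B[w]$ and $\Gamma\vdash A[w]$ imply $\Gamma\vdash B[w]$; ($\Diamond I$) $w\prec w'$ and $\Gamma\vdash A[w']$ imply $\Gamma\vdash\Diamond A[w]$; ($\Box I$) if $\Gamma\vdash A[w']$ for all $w'$ with $w\prec w'$ then $\Gamma\vdash\Box A[w]$;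 ($\Diamond E$) if $w''\prec^* w$, $\Gamma\vdash\Diamond A[w]$, and for all $w'$ with $w\prec w'$, $\Gamma\vdash A[w']$ implies $\Gamma\vdash C[w'']$, then $\Gamma\vdash C[w'']$; ($\Box E$) if $w''\prec^* w$, $\Gamma\vdash\Box A[w]$, and ($\Gamma\vdash A[w']$ for all $w'$ with $w\prec w'$) implies $\Gamma\vdash C[w'']$, then $\Gamma\vdash C[w'']$. Polarized propositions: $A^+ ::= Q^+ \mid {\downarrow}A^- \mid \bot \mid \Diamond A^+ \mid \Box A^+$ and $A^- ::= Q^- \mid {\uparrow}A^+ \mid A^+ \supset B^-$. $Q^+$ and ${\downarrow}A^-$ are $\mathit{stable}^+$; $Q^-$ and ${\uparrow}A^+$ are $\mathit{stable}^-$. In the focused calculus, $\Gamma$ is a finite collection of judgments $A^+[w]$ and the inversion context $\Omega$ is either empty ($\cdot$) or a single $A^+[w]$. There are three mutually defined judgments — right focus $\Gamma \vdash [A^+[w]]$, inversion $\Gamma;\Omega \Longrightarrow C^-[w]$, and left focus $\Gamma;[A^-[w']] \Longrightarrow C^-[w]$ — defined one world at a time (well-founded by converse well-foundedness), as the least relations closed under: Right focus: ($QR^+$) $\Gamma, Q^+[w] \vdash [Q^+[w]]$; (${\downarrow}R$) $\Gamma;\cdot\Longrightarrow A^-[w]$ implies $\Gamma\vdash[{\downarrow}A^-[w]]$; ($\Diamond R$) $w\prec w'$ and $\Gamma;\cdot\Longrightarrow {\uparrow}A^+[w']$ imply $\Gamma\vdash[\Diamond A^+[w]]$; ($\Box R$)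 if $\Gamma;\cdot\Longrightarrow{\uparrow}A^+[w']$ for all $w'$ with $w\prec w'$, then $\Gamma\vdash[\Box A^+[w]]$. Inversion: ($\supset R$) $\Gamma;A^+[w]\Longrightarrow B^-[w]$ implies $\Gamma;\cdot\Longrightarrow A^+\supset B^-[w]$; ($L$) if $A^+$ is $\mathit{stable}^+$ and $\Gamma, A^+[w'];\cdot\Longrightarrow C^-[w]$, then $\Gamma; A^+[w']\Longrightarrow C^-[w]$; (${\downarrow}L$) if $C^-$ is $\mathit{stable}^-$, $w\prec^* w'$, and $\Gamma,{\downarrow}A^-[w'];[A^-[w']]\Longrightarrow C^-[w]$, then $\Gamma,{\downarrow}A^-[w'];\cdot\Longrightarrow C^-[w]$; ($\bot L$) $\Gamma;\bot[w']\Longrightarrow C^-[w]$; ($\Diamond L$) if for all $w$ with $w'\prec w$, $\Gamma;\cdot\Longrightarrow{\uparrow}A^+[w]$ implies $\Gamma;\cdot\Longrightarrow C^-[w'']$, then $\Gamma;\Diamond A^+[w']\Longrightarrow C^-[w'']$; ($\Box L$) if ($\Gamma;\cdot\Longrightarrow{\uparrow}A^+[w]$ for all $w$ with $w'\prec w$) implies $\Gamma;\cdot\Longrightarrow C^-[w'']$, then $\Gamma;\Box A^+[w']\Longrightarrow C^-[w'']$; (${\uparrow}R$) $\Gamma\vdash[A^+[w]]$ implies $\Gamma;\cdot\Longrightarrow{\uparrow}A^+[w]$. Left focus: ($QL^-$) $\Gamma;[Q^-[w]]\Longrightarrow Q^-[w]$; (${\uparrow}L$) $\Gamma;A^+[w']\Longrightarrow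 C^-[w]$ implies $\Gamma;[{\uparrow}A^+[w']]\Longrightarrow C^-[w]$; ($\supset L$) $\Gamma\vdash[A^+[w']]$ and $\Gamma;[B^-[w']]\Longrightarrow C^-[w]$ imply $\Gamma;[A^+\supset B^-[w']]\Longrightarrow C^-[w]$. Polarization: $(Q^+)^\oplus=Q^+$, $(\bot)^\oplus=\bot$, $(\Diamond A)^\oplus=\Diamond A^\oplus$, $(\Box A)^\oplus=\Box A^\oplus$, $(Q^-)^\oplus={\downarrow}Q^-$, $(A\supset B)^\oplus={\downarrow}(A^\oplus\supset B^\ominus)$; $(Q^+)^\ominus={\uparrow}Q^+$, $(\bot)^\ominus={\uparrow}\bot$, $(\Diamond A)^\ominus={\uparrow}(\Diamond A^\oplus)$, $(\Box A)^\ominus={\uparrow}(\Box A^\oplus)$, $(Q^-)^\ominus=Q^-$, $(A\supset B)^\ominus=A^\oplus\supset B^\ominus$. Contexts: $(\cdot)^\circledcirc=\cdot$, $(\Gamma,Q^+[w])^\circledcirc=\Gamma^\circledcirc,Q^+[w]$, $(\Gamma,\bot[w])^\circledcirc=\Gamma^\circledcirc,{\downarrow}{\uparrow}\bot[w]$, $(\Gamma,\Diamond A[w])^\circledcirc=\Gamma^\circledcirc,{\downarrow}{\uparrow}(\Diamond A^\oplus)[w]$, $(\Gamma,\Box A[w])^\circledcirc=\Gamma^\circledcirc,{\downarrow}{\uparrow}(\Box A^\oplus)[w]$, $(\Gamma,Q^-[w])^\circledcirc=\Gamma^\circledcirc,{\downarrow}Q^-[w]$, $(\Gamma,A\supset B[w])^\circledcirc=\Gamma^\circledcirc,{\downarrow}(A^\oplus\supset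 B^\ominus)[w]$. *)

theory Defs
  imports Main
begin

datatype 'a uprop =
    PAtom 'a
  | NAtom 'a
  | UBot
  | UImp "'a uprop" "'a uprop"
  | UDia "'a uprop"
  | UBox "'a uprop"

datatype 'a ppos =
    PQ 'a
  | Down "'a pneg"
  | PBot
  | PDia "'a ppos"
  | PBox "'a ppos"
and 'a pneg =
    NQ 'a
  | Up "'a ppos"
  | PImp "'a ppos" "'a pneg"

fun stable_pos :: "'a ppos \<Rightarrow> bool" where
  "stable_pos (PQ q) = True"
| "stable_pos (Down A) = True"
| "stable_pos _ = False"

fun stable_neg :: "'a pneg \<Rightarrow> bool" where
  "stable_neg (NQ q) = True"
| "stable_neg (Up A) = True"
| "stable_neg _ = False"

text \<open>Contexts are finite collections of judgments, represented as lists
  (only membership and extension are used by the rules).\<close>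
type_synonym ('a, 'w) uctx = "('a uprop \<times> 'w) list"
type_synonym ('a, 'w) pctx = "('a ppos \<times> 'w) list"

text \<open>One stage of the definition: the least relation closed under the rules,
  where the (negatively occurring) provability judgments at strictly later
  worlds in the rules Dia-E and Box-E are given by the oracle P.\<close>
inductive nd_step ::
  "('w \<Rightarrow> 'w \<Rightarrow> bool) \<Rightarrow> (('a, 'w) uctx \<Rightarrow> 'a uprop \<Rightarrow> 'w \<Rightarrow> bool)
   \<Rightarrow> ('a, 'w) uctx \<Rightarrow> 'a uprop \<Rightarrow> 'w \<Rightarrow> bool"
  for R :: "'w \<Rightarrow> 'w \<Rightarrow> bool" and P :: "('a, 'w) uctx \<Rightarrow> 'a uprop \<Rightarrow> 'w \<Rightarrow> bool"
where
  nd_hyp: "(A, w) \<in> set \<Gamma> \<Longrightarrow> nd_step R P \<Gamma> A w"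
| nd_botE: "R\<^sup>*\<^sup>* w' w \<Longrightarrow> nd_step R P \<Gamma> UBot w \<Longrightarrow> nd_step R P \<Gamma> C w'"
| nd_impI: "nd_step R P ((A, w) # \<Gamma>) B w \<Longrightarrow> nd_step R P \<Gamma> (UImp A B) w"
| nd_impE: "nd_step R P \<Gamma> (UImp A B) w \<Longrightarrow> nd_step R P \<Gamma> A w \<Longrightarrow> nd_step R P \<Gamma> B w"
| nd_diaI: "R w w' \<Longrightarrow> nd_step R P \<Gamma> A w' \<Longrightarrow> nd_step R P \<Gamma> (UDia A) w"
| nd_boxI: "(\<forall>w'. R w w' \<longrightarrow> nd_step R P \<Gamma> A w') \<Longrightarrow> nd_step R P \<Gamma> (UBox A) w"
| nd_diaE: "R\<^sup>*\<^sup>* w'' w \<Longrightarrow> nd_step R P \<Gamma> (UDia A) w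
            \<Longrightarrow> (\<forall>w'. R w w' \<longrightarrow> P \<Gamma> A w' \<longrightarrow> nd_step R P \<Gamma> C w'')
            \<Longrightarrow> nd_step R P \<Gamma> C w''"
| nd_boxE: "R\<^sup>*\<^sup>* w'' w \<Longrightarrow> nd_step R P \<Gamma> (UBox A) w
            \<Longrightarrow> ((\<forall>w'. R w w' \<longrightarrow> P \<Gamma> A w') \<longrightarrow> nd_step R P \<Gamma> C w'')
            \<Longrightarrow> nd_step R P \<Gamma> C w''"

text \<open>The world-by-world definition: provability at w is the stage at
  w, whose oracle is provability at the worlds strictly reachable from
  w (well-founded recursion along the converse of the transitive
  closure of the accessibility relation).\<close>
definition later_rel :: "('w \<Rightarrow> 'w \<Rightarrow> bool) \<Rightarrow> ('w \<times> 'w) set" where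
  "later_rel R = {(v, w). R\<^sup>+\<^sup>+ w v}"

definition nd_world :: "('w \<Rightarrow> 'w \<Rightarrow> bool) \<Rightarrow> 'w \<Rightarrow> ('a, 'w) uctx \<Rightarrow> 'a uprop \<Rightarrow> bool" where
  "nd_world R = wfrec (later_rel R)
     (\<lambda>rec w \<Gamma> A. nd_step R (\<lambda>\<Gamma>' A' v. R\<^sup>+\<^sup>+ w v \<and> rec v \<Gamma>' A') \<Gamma> A w)"

definition ND :: "('w \<Rightarrow> 'w \<Rightarrow> bool) \<Rightarrow> ('a, 'w) uctx \<Rightarrow> 'a uprop \<Rightarrow> 'w \<Rightarrow> bool" where
  "ND R \<Gamma> A w = nd_world R w \<Gamma> A"

text \<open>One stage: right focus rfoc, inversion finv (with
  inversion context "\<Omega> :: ('a ppos \<times> 'w) option"), left focus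
  lfoc. The oracle P gives the inversion judgments
  "\<Gamma>; \<cdot> \<Longrightarrow> C-[w]" used negatively in Dia-L and Box-L.\<close>
inductive
  rfoc :: "('w \<Rightarrow> 'w \<Rightarrow> bool) \<Rightarrow> (('a, 'w) pctx \<Rightarrow> 'a pneg \<Rightarrow> 'w \<Rightarrow> bool)
           \<Rightarrow> ('a, 'w) pctx \<Rightarrow> 'a ppos \<Rightarrow> 'w \<Rightarrow> bool"
and
  finv :: "('w \<Rightarrow> 'w \<Rightarrow> bool) \<Rightarrow> (('a, 'w) pctx \<Rightarrow> 'a pneg \<Rightarrow> 'w \<Rightarrow> bool)
           \<Rightarrow> ('a, 'w) pctx \<Rightarrow> ('a ppos \<times> 'w) option \<Rightarrow> 'a pneg \<Rightarrow> 'w \<Rightarrow> bool"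
and
  lfoc :: "('w \<Rightarrow> 'w \<Rightarrow> bool) \<Rightarrow> (('a, 'w) pctx \<Rightarrow> 'a pneg \<Rightarrow> 'w \<Rightarrow> bool)
           \<Rightarrow> ('a, 'w) pctx \<Rightarrow> 'a pneg \<times> 'w \<Rightarrow> 'a pneg \<Rightarrow> 'w \<Rightarrow> bool"
  for R :: "'w \<Rightarrow> 'w \<Rightarrow> bool" and P :: "('a, 'w) pctx \<Rightarrow> 'a pneg \<Rightarrow> 'w \<Rightarrow> bool"
where
  QR: "(PQ q, w) \<in> set \<Gamma> \<Longrightarrow> rfoc R P \<Gamma> (PQ q) w"
| DownR: "finv R P \<Gamma> None A w \<Longrightarrow> rfoc R P \<Gamma> (Down A) w"
| DiaR: "R w w' \<Longrightarrow> finv R P \<Gamma> None (Up A) w' \<Longrightarrow> rfoc R P \<Gamma> (PDia A) w"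
| BoxR: "(\<forall>w'. R w w' \<longrightarrow> finv R P \<Gamma> None (Up A) w') \<Longrightarrow> rfoc R P \<Gamma> (PBox A) w"
| ImpR: "finv R P \<Gamma> (Some (A, w)) B w \<Longrightarrow> finv R P \<Gamma> None (PImp A B) w"
| L: "stable_pos A \<Longrightarrow> finv R P ((A, w') # \<Gamma>) None C w \<Longrightarrow> finv R P \<Gamma> (Some (A, w')) C w"
| DownL: "stable_neg C \<Longrightarrow> R\<^sup>*\<^sup>* w w' \<Longrightarrow> (Down A, w') \<in> set \<Gamma>
          \<Longrightarrow> lfoc R P \<Gamma> (A, w') C w \<Longrightarrow> finv R P \<Gamma> None C w"
| BotL: "finv R P \<Gamma> (Some (PBot, w')) C w"
| DiaL: "(\<forall>w. R w' w \<longrightarrow> P \<Gamma> (Up A) w \<longrightarrow> finv R P \<Gamma> None C w'')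
         \<Longrightarrow> finv R P \<Gamma> (Some (PDia A, w')) C w''"
| BoxL: "((\<forall>w. R w' w \<longrightarrow> P \<Gamma> (Up A) w) \<longrightarrow> finv R P \<Gamma> None C w'')
         \<Longrightarrow> finv R P \<Gamma> (Some (PBox A, w')) C w''"
| UpR: "rfoc R P \<Gamma> A w \<Longrightarrow> finv R P \<Gamma> None (Up A) w"
| QL: "lfoc R P \<Gamma> (NQ q, w) (NQ q) w"
| UpL: "finv R P \<Gamma> (Some (A, w')) C w \<Longrightarrow> lfoc R P \<Gamma> (Up A, w') C w"
| ImpL: "rfoc R P \<Gamma> A w' \<Longrightarrow> lfoc R P \<Gamma> (B, w') C w \<Longrightarrow> lfoc R P \<Gamma> (PImp A B, w') C w"

definition foc_world :: "('w \<Rightarrow> 'w \<Rightarrow> bool) \<Rightarrow> 'w \<Rightarrow> ('a, 'w) pctx \<Rightarrow> 'a pneg \<Rightarrow> bool" where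
  "foc_world R = wfrec (later_rel R)
     (\<lambda>rec w \<Gamma> C. finv R (\<lambda>\<Gamma>' C' v. R\<^sup>+\<^sup>+ w v \<and> rec v \<Gamma>' C') \<Gamma> None C w)"

definition FInv :: "('w \<Rightarrow> 'w \<Rightarrow> bool) \<Rightarrow> ('a, 'w) pctx \<Rightarrow> 'a pneg \<Rightarrow> 'w \<Rightarrow> bool" where
  "FInv R \<Gamma> C w = foc_world R w \<Gamma> C"

fun polp :: "'a uprop \<Rightarrow> 'a ppos" and poln :: "'a uprop \<Rightarrow> 'a pneg" where
  "polp (PAtom q) = PQ q"
| "polp UBot = PBot"
| "polp (UDia A) = PDia (polp A)"
| "polp (UBox A) = PBox (polp A)"
| "polp (NAtom q) = Down (NQ q)"
| "polp (UImp A B) = Down (PImp (polp A) (poln B))"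
| "poln (PAtom q) = Up (PQ q)"
| "poln UBot = Up PBot"
| "poln (UDia A) = Up (PDia (polp A))"
| "poln (UBox A) = Up (PBox (polp A))"
| "poln (NAtom q) = NQ q"
| "poln (UImp A B) = PImp (polp A) (poln B)"

fun polc_elem :: "'a uprop \<Rightarrow> 'a ppos" where
  "polc_elem (PAtom q) = PQ q"
| "polc_elem UBot = Down (Up PBot)"
| "polc_elem (UDia A) = Down (Up (PDia (polp A)))"
| "polc_elem (UBox A) = Down (Up (PBox (polp A)))"
| "polc_elem (NAtom q) = Down (NQ q)"
| "polc_elem (UImp A B) = Down (PImp (polp A) (poln B))"

definition polc :: "('a, 'w) uctx \<Rightarrow> ('a, 'w) pctx" where
  "polc \<Gamma> = map (\<lambda>(A, w). (polc_elem A, w)) \<Gamma>"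

end

theory Submission
  imports Defs
begin

text \<open>The equivalence is proved one world at a time, by well-founded induction
  along the converse of the accessibility relation.  At a world \<open>x\<close>, assume it
  holds at all strictly later worlds.  Then a modal formula \<open>\<Diamond>A\<close> or \<open>\<box>A\<close> at \<open>x\<close>
  is either true or false according to derivability at the later worlds, and
  by the induction hypothesis this truth value is the same in both systems.
  Replacing it by \<open>\<top>\<close> or \<open>\<bottom>\<close>, both natural deduction and the focused calculus
  at \<open>x\<close> collapse to one propositional focused calculus; judgments at later
  worlds occurring inside a derivation at \<open>x\<close> are settled by the induction
  hypothesis, and hypotheses at later worlds matter only through their
  derivability.  Cut admissibility and identity expansion for the
  propositional calculus make the natural deduction rules admissible in it.
  The one exception is a context that is inconsistent at some later world;
  then every judgment at \<open>x\<close> is derivable in both systems.\<close>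

section \<open>A propositional focused calculus\<close>

text \<open>The calculus of a single world: modal formulas, whose truth is decided
  at later worlds, are replaced by the constants \<open>LTop\<close> and \<open>LBot\<close>.\<close>

datatype 'a lpos = LQ 'a | LDown "'a lneg" | LBot | LTop
and 'a lneg = LNQ 'a | LUp "'a lpos" | LImp "'a lpos" "'a lneg"

fun lstable_pos :: "'a lpos \<Rightarrow> bool" where
  "lstable_pos (LQ q) = True"
| "lstable_pos (LDown N) = True"
| "lstable_pos _ = False"

fun lstable_neg :: "'a lneg \<Rightarrow> bool" where
  "lstable_neg (LNQ q) = True"
| "lstable_neg (LUp A) = True"
| "lstable_neg _ = False"

inductive lrfoc :: "'a lpos list \<Rightarrow> 'a lpos \<Rightarrow> bool"
  and lfinv :: "'a lpos list \<Rightarrow> 'a lpos option \<Rightarrow> 'a lneg \<Rightarrow> bool"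
  and llfoc :: "'a lpos list \<Rightarrow> 'a lneg \<Rightarrow> 'a lneg \<Rightarrow> bool"
where
  lQR: "LQ q \<in> set G \<Longrightarrow> lrfoc G (LQ q)"
| lDownR: "lfinv G None N \<Longrightarrow> lrfoc G (LDown N)"
| lTopR: "lrfoc G LTop"
| lImpR: "lfinv G (Some A) B \<Longrightarrow> lfinv G None (LImp A B)"
| lL: "lstable_pos A \<Longrightarrow> lfinv (A # G) None C \<Longrightarrow> lfinv G (Some A) C"
| lDownL: "lstable_neg C \<Longrightarrow> LDown N \<in> set G \<Longrightarrow> llfoc G N C \<Longrightarrow> lfinv G None C"
| lBotL: "lfinv G (Some LBot) C"
| lTopL: "lfinv G None C \<Longrightarrow> lfinv G (Some LTop) C"
| lUpR: "lrfoc G A \<Longrightarrow> lfinv G None (LUp A)"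
| lQL: "llfoc G (LNQ q) (LNQ q)"
| lUpL: "lfinv G (Some A) C \<Longrightarrow> llfoc G (LUp A) C"
| lImpL: "lrfoc G A \<Longrightarrow> llfoc G B C \<Longrightarrow> llfoc G (LImp A B) C"

inductive_cases lrfocE: "lrfoc G A"
inductive_cases lfinv_SomeE: "lfinv G (Some A) C"
inductive_cases lfinv_NoneE: "lfinv G None C"
inductive_cases llfocE: "llfoc G N C"

lemmas local_intros = lrfoc_lfinv_llfoc.intros
lemmas local_induct = lrfoc_lfinv_llfoc.inducts

lemma local_weaken:
  "lrfoc G A \<Longrightarrow> set G \<subseteq> set G' \<Longrightarrow> lrfoc G' A"
  "lfinv G Om C \<Longrightarrow> set G \<subseteq> set G' \<Longrightarrow> lfinv G' Om C"
  "llfoc G N C \<Longrightarrow> set G \<subseteq> set G' \<Longrightarrow> llfoc G' N C"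
proof (induction arbitrary: G' and G' and G' rule: local_induct)
  case (lL A G C)
  have "lfinv (A # G') None C" using lL(3)[of "A # G'"] lL(4) by auto
  then show ?case using lL(1) by (blast intro: local_intros)
qed (auto intro: local_intros)

lemma lfinv_Some_stableD: "lfinv G (Some A) C \<Longrightarrow> lstable_pos A \<Longrightarrow> lfinv (A # G) None C"
  by (erule lfinv_SomeE) auto

lemma lfinv_Some_TopD: "lfinv G (Some LTop) C \<Longrightarrow> lfinv G None C"
  by (erule lfinv_SomeE) auto

lemma lfinv_Imp_stableD:
  shows "lrfoc G X \<Longrightarrow> True"
    and "lfinv G Om D \<Longrightarrow> D = LImp C1 C2 \<Longrightarrow> lstable_pos C1 \<Longrightarrow> lfinv (C1 # G) Om C2"
    and "llfoc G M D \<Longrightarrow> True"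
proof (induction rule: local_induct)
  case (lImpR G A B)
  then show ?case using lfinv_Some_stableD by blast
next
  case (lL A G C)
  then have "lfinv (A # C1 # G) None C2" by (auto elim: local_weaken(2))
  then show ?case using lL(1) by (blast intro: local_intros)
qed (auto intro: local_intros)

lemma lfinv_Imp_TopD:
  shows "lrfoc G X \<Longrightarrow> True"
    and "lfinv G Om D \<Longrightarrow> D = LImp LTop C \<Longrightarrow> lfinv G Om C"
    and "llfoc G M D \<Longrightarrow> True"
  by (induction rule: local_induct) (auto intro: local_intros lfinv_Some_TopD)

text \<open>The four cut principles, proved together by induction on the size of the cut formula.\<close>

definition cut_rfoc :: "'a lpos \<Rightarrow> bool" where
  "cut_rfoc A \<longleftrightarrow> (\<forall>G C. lrfoc G A \<longrightarrow> lfinv G (Some A) C \<longrightarrow> lfinv G None C)"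

definition cut_lfoc :: "'a lneg \<Rightarrow> bool" where
  "cut_lfoc N \<longleftrightarrow> (\<forall>G C. lfinv G None N \<longrightarrow> llfoc G N C \<longrightarrow> lfinv G None C)"

definition cut_down :: "'a lneg \<Rightarrow> bool" where
  "cut_down N \<longleftrightarrow> (\<forall>G H Om C. lfinv G None N \<longrightarrow> set H \<subseteq> insert (LDown N) (set G)
                      \<longrightarrow> lfinv H Om C \<longrightarrow> lfinv G Om C)"

definition cut_up :: "'a lpos \<Rightarrow> bool" where
  "cut_up A \<longleftrightarrow> (\<forall>G C. lfinv G None (LUp A) \<longrightarrow> lfinv G (Some A) C \<longrightarrow> lfinv G None C)"

lemma cut_lfoc_step:
  fixes N :: "'a lneg"
  assumes "\<And>A :: 'a lpos. size A < size N \<Longrightarrow> cut_rfoc A \<and> cut_up A"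
    and "\<And>N' :: 'a lneg. size N' < size N \<Longrightarrow> cut_lfoc N'"
  shows "cut_lfoc N"
  unfolding cut_lfoc_def
proof (intro allI impI)
  fix G C assume l: "lfinv G None N" and r: "llfoc G N C"
  show "lfinv G None C"
  proof (cases N)
    case (LNQ q)
    then show ?thesis using l r by (auto elim: llfocE)
  next
    case (LUp A)
    then show ?thesis using l r assms(1)[of A] unfolding cut_up_def by (auto elim: llfocE)
  next
    case (LImp A B)
    have "lfinv G (Some A) B" using l LImp by (auto elim: lfinv_NoneE)
    moreover have "lrfoc G A" "llfoc G B C" using r LImp by (auto elim: llfocE)
    moreover have "cut_rfoc A" "cut_lfoc B" using assms LImp by auto
    ultimately show ?thesis unfolding cut_rfoc_def cut_lfoc_def by blast
  qed
qed

lemma cut_down_aux: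
  assumes "cut_lfoc N"
  shows "lrfoc H A \<Longrightarrow> (\<forall>G. lfinv G None N \<longrightarrow> set H \<subseteq> insert (LDown N) (set G) \<longrightarrow> lrfoc G A)"
    and "lfinv H Om C \<Longrightarrow> (\<forall>G. lfinv G None N \<longrightarrow> set H \<subseteq> insert (LDown N) (set G) \<longrightarrow> lfinv G Om C)"
    and "llfoc H M C \<Longrightarrow> (\<forall>G. lfinv G None N \<longrightarrow> set H \<subseteq> insert (LDown N) (set G) \<longrightarrow> llfoc G M C)"
proof (induction rule: local_induct)
  case (lL A H C)
  show ?case
  proof (intro allI impI)
    fix G assume G: "lfinv G None N" "set H \<subseteq> insert (LDown N) (set G)"
    have "lfinv (A # G) None N" using G(1) by (rule local_weaken) auto
    moreover have "set (A # H) \<subseteq> insert (LDown N) (set (A # G))" using G(2) by auto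
    ultimately have "lfinv (A # G) None C" using lL(3) by blast
    then show "lfinv G (Some A) C" using lL(1) by (blast intro: local_intros)
  qed
next
  case (lDownL C M H)
  show ?case
  proof (intro allI impI)
    fix G assume G: "lfinv G None N" "set H \<subseteq> insert (LDown N) (set G)"
    have l: "llfoc G M C" using lDownL G by blast
    show "lfinv G None C"
    proof (cases "M = N")
      case True
      then show ?thesis using assms G(1) l unfolding cut_lfoc_def by blast
    next
      case False
      then have "LDown M \<in> set G" using lDownL G by auto
      then show ?thesis using lDownL(1) l by (rule_tac lrfoc_lfinv_llfoc.lDownL)
    qed
  qed
qed (auto intro: local_intros)

lemma cut_down_if_cut_lfoc: "cut_lfoc N \<Longrightarrow> cut_down N"
  unfolding cut_down_def using cut_down_aux(2) by blast

lemma cut_rfoc_step: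
  fixes A :: "'a lpos"
  assumes "\<And>N :: 'a lneg. size N < size A \<Longrightarrow> cut_down N"
  shows "cut_rfoc A"
  unfolding cut_rfoc_def
proof (intro allI impI)
  fix G C assume l: "lrfoc G A" and r: "lfinv G (Some A) C"
  show "lfinv G None C"
  proof (cases A)
    case (LQ q)
    then have "LQ q \<in> set G" "lfinv (LQ q # G) None C"
      using l lfinv_Some_stableD[OF r] by (auto elim: lrfocE)
    then show ?thesis by (auto elim: local_weaken(2))
  next
    case (LDown N)
    then have "lfinv G None N" "lfinv (LDown N # G) None C" "cut_down N"
      using l lfinv_Some_stableD[OF r] assms[of N] by (auto elim: lrfocE)
    then show ?thesis unfolding cut_down_def by (metis list.set(2) order_refl)
  next
    case LBot
    then show ?thesis using l by (auto elim: lrfocE)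
  next
    case LTop
    then show ?thesis using r lfinv_Some_TopD by simp
  qed
qed

text \<open>Cutting an \<open>LUp A\<close> against a stable goal: the cut is pushed up the
  left derivation until it meets the \<open>lUpR\<close> that introduced \<open>LUp A\<close>.\<close>

lemma cut_up_stable_aux:
  assumes "cut_rfoc A" and "lstable_neg C"
  shows "lrfoc G X \<Longrightarrow> True"
    and "lfinv G Om D \<Longrightarrow> D = LUp A \<Longrightarrow> (\<forall>G'. set G \<subseteq> set G' \<longrightarrow> lfinv G' (Some A) C)
         \<Longrightarrow> lfinv G Om C"
    and "llfoc G M D \<Longrightarrow> D = LUp A \<Longrightarrow> (\<forall>G'. set G \<subseteq> set G' \<longrightarrow> lfinv G' (Some A) C)
         \<Longrightarrow> llfoc G M C"
proof (induction rule: local_induct)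
  case (lL B G D)
  then have "lfinv (B # G) None C" by auto
  then show ?case using lL(1) by (blast intro: local_intros)
next
  case (lDownL D N G)
  then show ?case using assms(2) by (blast intro: local_intros)
next
  case (lUpR G A')
  then show ?case using assms(1) unfolding cut_rfoc_def by blast
qed (auto intro: local_intros)

lemma cut_up_stable:
  assumes "cut_rfoc A" "lstable_neg C" "lfinv G None (LUp A)" "lfinv G (Some A) C"
  shows "lfinv G None C"
proof -
  have "\<forall>G'. set G \<subseteq> set G' \<longrightarrow> lfinv G' (Some A) C" using assms(4) local_weaken(2) by blast
  then show ?thesis using cut_up_stable_aux(2)[OF assms(1,2,3) refl] by blast
qed

lemma cut_up_if_cut_rfoc:
  assumes "cut_rfoc A"
  shows "lfinv G None (LUp A) \<Longrightarrow> lfinv G (Some A) C \<Longrightarrow> lfinv G None C"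
proof (induction C arbitrary: G rule: lneg.induct[where ?P1.0="\<lambda>_. True"])
  case (LImp C1 C2)
  consider "lstable_pos C1" | "C1 = LBot" | "C1 = LTop" by (cases C1) auto
  then show ?case
  proof cases
    case 1
    have "lfinv (C1 # G) None (LUp A)" using LImp(3) by (rule local_weaken) auto
    moreover have "lfinv (C1 # G) (Some A) C2" using lfinv_Imp_stableD(2)[OF LImp(4) refl 1] .
    ultimately have "lfinv (C1 # G) None C2" by (rule LImp(2))
    then have "lfinv G (Some C1) C2" using 1 by (rule_tac lL)
    then show ?thesis by (rule lImpR)
  next
    case 2
    have "lfinv G (Some LBot) C2" by (rule lBotL)
    then show ?thesis unfolding 2 by (rule lImpR)
  next
    case 3
    have "lfinv G (Some A) C2" using lfinv_Imp_TopD(2)[OF LImp(4)] 3 by simp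
    then have "lfinv G (Some LTop) C2" using LImp(2)[OF LImp(3)] by (rule_tac lTopL)
    then show ?thesis unfolding 3 by (rule lImpR)
  qed
qed (auto intro: cut_up_stable[OF assms])

lemma local_cuts_below:
  "(\<forall>A :: 'a lpos. size A < n \<longrightarrow> cut_rfoc A \<and> cut_up A) \<and>
   (\<forall>N :: 'a lneg. size N < n \<longrightarrow> cut_lfoc N \<and> cut_down N)"
proof (induction n)
  case (Suc n)
  have lfoc: "cut_lfoc N" if "size N \<le> n" for N :: "'a lneg"
  proof (rule cut_lfoc_step)
    show "cut_rfoc A \<and> cut_up A" if "size A < size N" for A :: "'a lpos"
    proof -
      have "size A < n" using that \<open>size N \<le> n\<close> by linarith
      then show ?thesis using Suc.IH by blast
    qed
    show "cut_lfoc N'" if "size N' < size N" for N' :: "'a lneg"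
    proof -
      have "size N' < n" using that \<open>size N \<le> n\<close> by linarith
      then show ?thesis using Suc.IH by blast
    qed
  qed
  have rfoc: "cut_rfoc A" if "size A \<le> n" for A :: "'a lpos"
  proof (rule cut_rfoc_step)
    fix N :: "'a lneg" assume "size N < size A"
    then have "size N < n" using that by linarith
    then show "cut_down N" using Suc.IH by blast
  qed
  have "cut_rfoc A \<and> cut_up A" if "size A < Suc n" for A :: "'a lpos"
    using rfoc[of A] that cut_up_if_cut_rfoc unfolding cut_up_def by auto
  moreover have "cut_lfoc N \<and> cut_down N" if "size N < Suc n" for N :: "'a lneg"
    using lfoc[of N] that cut_down_if_cut_lfoc by auto
  ultimately show ?case by blast
qed simp

lemma lfinv_cut_down:
  assumes "lfinv G None N" "lfinv (LDown N # G) Om C" shows "lfinv G Om C"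
proof -
  have "cut_down N" using local_cuts_below[of "Suc (size N)"] by blast
  then show ?thesis using assms unfolding cut_down_def by (metis list.set(2) order_refl)
qed

lemma lfinv_cut_up:
  assumes "lfinv G None (LUp A)" "lfinv G (Some A) C" shows "lfinv G None C"
proof -
  have "cut_up A" using local_cuts_below[of "Suc (size A)"] by blast
  then show ?thesis using assms unfolding cut_up_def by blast
qed

lemma lfinv_explode: "lfinv G None (LUp LBot) \<Longrightarrow> lfinv G None C"
  using lfinv_cut_up lBotL by blast

lemma identity_expansion:
  "(\<forall>G'. set G \<subseteq> set G' \<longrightarrow> lrfoc G' A \<longrightarrow> lfinv G' None C) \<Longrightarrow> lfinv G (Some A) C"
  "(\<forall>G' C. set G \<subseteq> set G' \<longrightarrow> lstable_neg C \<longrightarrow> llfoc G' N C \<longrightarrow> lfinv G' None C)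
   \<Longrightarrow> lfinv G None N"
proof (induction A and N arbitrary: G C and G)
  case (LQ q)
  have "lrfoc (LQ q # G) (LQ q)" by (rule lQR) simp
  then have "lfinv (LQ q # G) None C" using LQ by (meson set_subset_Cons)
  then show ?case by (auto intro: lL)
next
  case (LDown N)
  have "lfinv (LDown N # G) None N" by (rule LDown.IH) (auto intro: local_intros)
  then have "lrfoc (LDown N # G) (LDown N)" by (rule lDownR)
  then have "lfinv (LDown N # G) None C" using LDown.prems by (meson set_subset_Cons)
  then show ?case by (auto intro: local_intros)
next
  case (LUp A)
  have "lfinv G (Some A) (LUp A)" by (rule LUp.IH) (auto intro: local_intros)
  then have "llfoc G (LUp A) (LUp A)" by (rule lUpL)
  then show ?case using LUp.prems by (metis order_refl lstable_neg.simps(2))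
next
  case (LImp A B)
  have "lfinv G' None B" if "set G \<subseteq> set G'" "lrfoc G' A" for G'
  proof (rule LImp.IH(2), intro allI impI)
    fix G'' C assume "set G' \<subseteq> set G''" "lstable_neg C" "llfoc G'' B C"
    moreover have "lrfoc G'' A" using that(2) \<open>set G' \<subseteq> set G''\<close> by (rule local_weaken)
    ultimately show "lfinv G'' None C" using LImp.prems that(1) by (blast intro: local_intros)
  qed
  then have "lfinv G (Some A) B" by (intro LImp.IH(1)) blast
  then show ?case by (rule local_intros)
next
  case (LNQ q)
  have "llfoc G (LNQ q) (LNQ q)" by (rule lQL)
  then show ?case using LNQ by (metis order_refl lstable_neg.simps(1))
qed (auto intro: lBotL lTopL lTopR)

lemma lfinv_DownD: "LDown N \<in> set G \<Longrightarrow> lfinv G None N"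
  by (rule identity_expansion(2)) (auto intro: local_intros)

section \<open>Collapsing one world to the propositional calculus\<close>

fun loc_pos :: "('a ppos \<Rightarrow> bool) \<Rightarrow> ('a ppos \<Rightarrow> bool) \<Rightarrow> 'a ppos \<Rightarrow> 'a lpos"
and loc_neg :: "('a ppos \<Rightarrow> bool) \<Rightarrow> ('a ppos \<Rightarrow> bool) \<Rightarrow> 'a pneg \<Rightarrow> 'a lneg" where
  "loc_pos dia box (PQ q) = LQ q"
| "loc_pos dia box (Down N) = LDown (loc_neg dia box N)"
| "loc_pos dia box PBot = LBot"
| "loc_pos dia box (PDia A) = (if dia A then LTop else LBot)"
| "loc_pos dia box (PBox A) = (if box A then LTop else LBot)"
| "loc_neg dia box (NQ q) = LNQ q"
| "loc_neg dia box (Up A) = LUp (loc_pos dia box A)"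
| "loc_neg dia box (PImp A B) = LImp (loc_pos dia box A) (loc_neg dia box B)"

definition loc_ctx :: "('a ppos \<Rightarrow> bool) \<Rightarrow> ('a ppos \<Rightarrow> bool) \<Rightarrow> 'w \<Rightarrow> ('a, 'w) uctx \<Rightarrow> 'a lpos list" where
  "loc_ctx dia box x \<Delta> = map (\<lambda>(B, z). loc_pos dia box (polc_elem B)) (filter (\<lambda>(B, z). z = x) \<Delta>)"

definition pol_goal :: "'a pneg \<Rightarrow> bool" where
  "pol_goal c \<longleftrightarrow> (\<exists>B. c = poln B) \<or> (\<exists>B. c = Up (polp B))"

lemma pol_goal_poln [simp]: "pol_goal (poln B)"
  and pol_goal_Up_polp [simp]: "pol_goal (Up (polp B))"
  unfolding pol_goal_def by auto

lemma loc_ctx_mem: "s \<in> set (loc_ctx dia box x \<Delta>) \<longleftrightarrow> (\<exists>B. (B, x) \<in> set \<Delta> \<and> s = loc_pos dia box (polc_elem B))"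
  unfolding loc_ctx_def by force

lemma loc_ctx_Cons_same: "loc_ctx dia box x ((A, x) # \<Delta>) = loc_pos dia box (polc_elem A) # loc_ctx dia box x \<Delta>"
  unfolding loc_ctx_def by simp

lemma loc_ctx_Cons_other: "w \<noteq> x \<Longrightarrow> loc_ctx dia box x ((A, w) # \<Delta>) = loc_ctx dia box x \<Delta>"
  unfolding loc_ctx_def by simp

lemma polc_Cons: "polc ((A, w) # \<Delta>) = (polc_elem A, w) # polc \<Delta>"
  unfolding polc_def by simp

lemma polc_mem: "(a, w) \<in> set (polc \<Delta>) \<longleftrightarrow> (\<exists>B. (B, w) \<in> set \<Delta> \<and> a = polc_elem B)"
  unfolding polc_def by force

lemma polc_elem_eq_PQ: "polc_elem B = PQ q \<longleftrightarrow> B = PAtom q"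
  by (cases B) auto

lemma polc_elem_DownD: "polc_elem B = Down N \<Longrightarrow> N = poln B"
  by (cases B) auto

lemma polc_elem_polp: "stable_pos (polp A) \<Longrightarrow> polc_elem A = polp A"
  by (cases A) auto

lemma polp_DownD: "polp B = Down N \<Longrightarrow> N = poln B"
  and polp_PBotD: "polp B = PBot \<Longrightarrow> B = UBot"
  and polp_PDiaD: "polp B = PDia a \<Longrightarrow> \<exists>A. B = UDia A \<and> a = polp A"
  and polp_PBoxD: "polp B = PBox a \<Longrightarrow> \<exists>A. B = UBox A \<and> a = polp A"
  and poln_UpD: "poln B = Up a \<Longrightarrow> a = polp B"
  and poln_PImpD: "poln B = PImp a b \<Longrightarrow> \<exists>B1 B2. B = UImp B1 B2 \<and> a = polp B1 \<and> b = poln B2"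
  by (cases B; auto)+

lemma NQ_eq_poln_iff: "NQ q = poln B \<longleftrightarrow> B = NAtom q"
  by (cases B) auto

lemma polp_inj: "polp A = polp A' \<Longrightarrow> A = A'"
proof -
  have "(\<forall>A'. polp A = polp A' \<longrightarrow> A = A') \<and> (\<forall>A'. poln A = poln A' \<longrightarrow> A = A')"
    by (induction A) (intro conjI allI impI; case_tac A'; auto)+
  then show "polp A = polp A' \<Longrightarrow> A = A'" by blast
qed

lemma lstable_loc_pos_iff [simp]: "lstable_pos (loc_pos dia box a) \<longleftrightarrow> stable_pos a"
  and lstable_loc_neg_iff [simp]: "lstable_neg (loc_neg dia box c) \<longleftrightarrow> stable_neg c"
  by (cases a; simp) (cases c; simp)

lemma loc_pos_polc_LQD: "loc_pos dia box (polc_elem B) = LQ q \<Longrightarrow> B = PAtom q"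
  and loc_pos_polc_LDownD:
    "loc_pos dia box (polc_elem B) = LDown n \<Longrightarrow> polc_elem B = Down (poln B) \<and> n = loc_neg dia box (poln B)"
  and loc_pos_polp_LQD: "loc_pos dia box (polp B) = LQ q \<Longrightarrow> B = PAtom q"
  and loc_pos_polp_LDownD:
    "loc_pos dia box (polp B) = LDown n \<Longrightarrow> polp B = Down (poln B) \<and> n = loc_neg dia box (poln B)"
  and loc_pos_polp_LTopD: "loc_pos dia box (polp B) = LTop \<Longrightarrow>
    (\<exists>A. B = UDia A \<and> dia (polp A)) \<or> (\<exists>A. B = UBox A \<and> box (polp A))"
  and loc_pos_polp_LBotD: "loc_pos dia box (polp B) = LBot \<Longrightarrow>
    B = UBot \<or> (\<exists>A. B = UDia A \<and> \<not> dia (polp A)) \<or> (\<exists>A. B = UBox A \<and> \<not> box (polp A))"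
  and loc_neg_poln_LNQD: "loc_neg dia box (poln B) = LNQ q \<Longrightarrow> B = NAtom q"
  and loc_neg_poln_LUpD:
    "loc_neg dia box (poln B) = LUp a \<Longrightarrow> poln B = Up (polp B) \<and> a = loc_pos dia box (polp B)"
  and loc_neg_poln_LImpD: "loc_neg dia box (poln B) = LImp a b \<Longrightarrow>
    \<exists>B1 B2. B = UImp B1 B2 \<and> a = loc_pos dia box (polp B1) \<and> b = loc_neg dia box (poln B2)"
  by (cases B; auto split: if_splits)+

lemma pol_goal_LImpD: "pol_goal c \<Longrightarrow> loc_neg dia box c = LImp a b \<Longrightarrow>
    \<exists>B1 B2. c = PImp (polp B1) (poln B2) \<and> a = loc_pos dia box (polp B1) \<and> b = loc_neg dia box (poln B2)"
  and pol_goal_LUpD: "pol_goal c \<Longrightarrow> loc_neg dia box c = LUp s \<Longrightarrow>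
    \<exists>B. c = Up (polp B) \<and> s = loc_pos dia box (polp B)"
  and pol_goal_LNQD: "pol_goal c \<Longrightarrow> loc_neg dia box c = LNQ q \<Longrightarrow> c = NQ q"
  unfolding pol_goal_def by (auto dest!: loc_neg_poln_LImpD loc_neg_poln_LUpD loc_neg_poln_LNQD) blast

lemma pol_goal_UpD: "pol_goal (Up a) \<Longrightarrow> \<exists>B. a = polp B"
  and pol_goal_PImpD: "pol_goal (PImp a b) \<Longrightarrow> \<exists>B1 B2. a = polp B1 \<and> b = poln B2"
  unfolding pol_goal_def by (auto dest: poln_UpD[OF sym] poln_PImpD[OF sym])

lemma lfinv_hyp:
  "loc_pos dia box (polc_elem B) \<in> set G \<Longrightarrow> lfinv G None (loc_neg dia box (poln B))"
  by (cases B) (auto intro: lUpR lQR lfinv_DownD)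

lemma lfinv_impI:
  assumes "lfinv (loc_pos dia box (polc_elem A) # G) None c"
  shows "lfinv G None (LImp (loc_pos dia box (polp A)) c)"
proof -
  have top: "lfinv G (Some LTop) c" if "loc_pos dia box (polc_elem A) = LDown (LUp LTop)"
  proof -
    have "lfinv G None (LUp LTop)" by (intro lUpR lTopR)
    then show ?thesis using assms that by (auto intro: lTopL lfinv_cut_down)
  qed
  have "lfinv G (Some (loc_pos dia box (polp A))) c"
    by (cases A) (use assms top in \<open>auto intro: lL lBotL\<close>)
  then show ?thesis by (rule lImpR)
qed

lemma poln_Up_or_polp_Down: "poln A = Up (polp A) \<or> polp A = Down (poln A)"
  by (cases A) auto

lemma lfinv_impE:
  assumes "lfinv G None (LImp (loc_pos dia box (polp A)) c)" "lfinv G None (loc_neg dia box (poln A))"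
  shows "lfinv G None c"
proof -
  have r: "lfinv G (Some (loc_pos dia box (polp A))) c" using assms(1) by (auto elim: lfinv_NoneE)
  from poln_Up_or_polp_Down[of A] show ?thesis
  proof
    assume "poln A = Up (polp A)"
    then show ?thesis using assms(2) r by (auto intro: lfinv_cut_up)
  next
    assume "polp A = Down (poln A)"
    then show ?thesis using assms(2) lfinv_Some_stableD[OF r] by (auto intro: lfinv_cut_down)
  qed
qed

lemma lfinv_shift:
  "lfinv G None (loc_neg dia box (poln B)) \<Longrightarrow> lfinv G None (LUp (loc_pos dia box (polp B)))"
  by (cases B) (auto intro: lUpR lDownR)

inductive_cases rfocBotE: "rfoc R P \<Gamma> PBot w"

lemma finv_Up_PBot_explode:
  shows "rfoc R P \<Gamma> a u \<Longrightarrow> True"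
    and "finv R P \<Gamma> Om g u \<Longrightarrow> g = Up PBot \<Longrightarrow> R\<^sup>*\<^sup>* x u \<Longrightarrow> (\<forall>a w1. Om = Some (a, w1) \<longrightarrow> R\<^sup>*\<^sup>* x w1)
         \<Longrightarrow> stable_neg C \<Longrightarrow> finv R P \<Gamma> Om C x"
    and "lfoc R P \<Gamma> F g u \<Longrightarrow> g = Up PBot \<Longrightarrow> R\<^sup>*\<^sup>* x u \<Longrightarrow> R\<^sup>*\<^sup>* x (snd F) \<Longrightarrow> stable_neg C
         \<Longrightarrow> lfoc R P \<Gamma> F C x"
proof (induction rule: rfoc_finv_lfoc.inducts)
  case (DownL C' w w' A \<Gamma>)
  have xw: "R\<^sup>*\<^sup>* x w'" using DownL by (meson rtranclp_trans)
  then have l: "lfoc R P \<Gamma> (A, w') C x" using DownL by simp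
  show ?case by (rule rfoc_finv_lfoc.DownL) (use DownL l xw in auto)
next
  case (UpR \<Gamma> A w)
  then show ?case by (auto elim: rfocBotE)
next
  case (DiaL w' \<Gamma> A C' w'')
  then show ?case by (auto intro!: rfoc_finv_lfoc.DiaL)
next
  case (BoxL w' \<Gamma> A C' w'')
  then show ?case by (auto intro!: rfoc_finv_lfoc.BoxL)
qed (auto intro: rfoc_finv_lfoc.intros)

section \<open>Derivability at later worlds\<close>

context
  fixes R :: "'w \<Rightarrow> 'w \<Rightarrow> bool"
  assumes converse_wf: "wfP (\<lambda>x y. R y x)"
begin

lemma wf_later_rel: "wf (later_rel R)"
proof -
  have "(\<lambda>x y. R y x)\<^sup>+\<^sup>+ = (\<lambda>x y. R\<^sup>+\<^sup>+ y x)"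
    by (auto simp: fun_eq_iff intro: tranclp_converseI tranclp_converseD[unfolded conversep_iff]
             dest: tranclp_converseD)
  then have "wfP (\<lambda>x y. (x, y) \<in> later_rel R)"
    using wfp_tranclp[OF converse_wf] by (simp add: later_rel_def)
  then show ?thesis by (simp add: wfp_wf_eq)
qed

lemma later_induct:
  assumes "\<And>u. (\<And>y. R\<^sup>+\<^sup>+ u y \<Longrightarrow> P y) \<Longrightarrow> P u" shows "P u"
  by (rule wf_induct[OF wf_later_rel]) (use assms in \<open>auto simp: later_rel_def\<close>)

lemma later_not_back: "R\<^sup>+\<^sup>+ x y \<Longrightarrow> \<not> R\<^sup>*\<^sup>* y x"
proof
  assume "R\<^sup>+\<^sup>+ x y" "R\<^sup>*\<^sup>* y x"
  then have "(x, x) \<in> later_rel R" by (simp add: later_rel_def tranclp_rtranclp_tranclp)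
  with wf_later_rel show False by (meson wf_not_refl)
qed

lemma rtranclp_neq_tranclp: "R\<^sup>*\<^sup>* x w \<Longrightarrow> w \<noteq> x \<Longrightarrow> R\<^sup>+\<^sup>+ x w"
  by (metis rtranclpD)

definition nd_later :: "'w \<Rightarrow> ('a, 'w) uctx \<Rightarrow> 'a uprop \<Rightarrow> 'w \<Rightarrow> bool" where
  "nd_later w = (\<lambda>\<Gamma> A v. R\<^sup>+\<^sup>+ w v \<and> ND R \<Gamma> A v)"

lemma ND_unfold: "ND R \<Gamma> A w = nd_step R (nd_later w) \<Gamma> A w"
proof -
  have eq: "nd_world R w = (\<lambda>\<Gamma> A. nd_step R (\<lambda>\<Gamma>' A' v. R\<^sup>+\<^sup>+ w v \<and> nd_world R v \<Gamma>' A') \<Gamma> A w)"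
    unfolding nd_world_def
    by (subst wfrec[OF wf_later_rel]) (simp add: cut_def later_rel_def cong: conj_cong)
  show ?thesis unfolding ND_def nd_later_def by (simp only: eq)
qed

text \<open>The oracle occurs negatively in the modal eliminations, so replaying a
  derivation with a new oracle \<open>P'\<close> needs \<open>P'\<close> to imply the old one.\<close>

lemma nd_step_simulate:
  assumes "nd_step R P \<Gamma> A x" "R\<^sup>*\<^sup>* u x" "Q x \<Gamma> \<Gamma>'"
   and mono: "\<And>x x' \<Gamma> \<Gamma>'. Q x \<Gamma> \<Gamma>' \<Longrightarrow> R\<^sup>*\<^sup>* x x' \<Longrightarrow> Q x' \<Gamma> \<Gamma>'"
   and Cons: "\<And>x \<Gamma> \<Gamma>' B. Q x \<Gamma> \<Gamma>' \<Longrightarrow> R\<^sup>*\<^sup>* u x \<Longrightarrow> Q x ((B, x) # \<Gamma>) ((B, x) # \<Gamma>')"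
   and hyp: "\<And>x \<Gamma> \<Gamma>' B. Q x \<Gamma> \<Gamma>' \<Longrightarrow> R\<^sup>*\<^sup>* u x \<Longrightarrow> (B, x) \<in> set \<Gamma> \<Longrightarrow> nd_step R P' \<Gamma>' B x"
   and upper: "\<And>x \<Gamma> \<Gamma>' B y. Q x \<Gamma> \<Gamma>' \<Longrightarrow> R\<^sup>*\<^sup>* u x \<Longrightarrow> R x y \<Longrightarrow> P' \<Gamma>' B y \<Longrightarrow> P \<Gamma> B y"
  shows "nd_step R P' \<Gamma>' A x"
  using assms(1-3)
proof (induction arbitrary: \<Gamma>' rule: nd_step.induct)
  case (nd_hyp A w \<Gamma>)
  then show ?case using hyp by blast
next
  case (nd_botE w' w \<Gamma> C)
  have "R\<^sup>*\<^sup>* u w" using nd_botE by auto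
  moreover have "Q w \<Gamma> \<Gamma>'" using mono nd_botE by blast
  ultimately show ?case using nd_botE by (blast intro: nd_step.nd_botE)
next
  case (nd_impI A w \<Gamma> B)
  then show ?case using Cons by (blast intro: nd_step.nd_impI)
next
  case (nd_impE \<Gamma> A B w)
  then show ?case by (blast intro: nd_step.nd_impE)
next
  case (nd_diaI w w' \<Gamma> A)
  then show ?case using mono by (meson nd_step.nd_diaI r_into_rtranclp rtranclp.rtrancl_into_rtrancl)
next
  case (nd_boxI w \<Gamma> A)
  have "\<forall>w'. R w w' \<longrightarrow> nd_step R P' \<Gamma>' A w'"
  proof (intro allI impI)
    fix w' assume "R w w'"
    then have "R\<^sup>*\<^sup>* u w'" "Q w' \<Gamma> \<Gamma>'" using nd_boxI mono[OF _ r_into_rtranclp] by auto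
    then show "nd_step R P' \<Gamma>' A w'" using nd_boxI \<open>R w w'\<close> by blast
  qed
  then show ?case by (rule nd_step.nd_boxI)
next
  case (nd_diaE w'' w \<Gamma> A C)
  have u: "R\<^sup>*\<^sup>* u w" using nd_diaE by auto
  have q: "Q w \<Gamma> \<Gamma>'" using mono nd_diaE by blast
  show ?case
  proof (rule nd_step.nd_diaE[OF nd_diaE(1)])
    show "nd_step R P' \<Gamma>' (UDia A) w" using nd_diaE u q by blast
    show "\<forall>w'. R w w' \<longrightarrow> P' \<Gamma>' A w' \<longrightarrow> nd_step R P' \<Gamma>' C w''"
      using nd_diaE upper[OF q u] by blast
  qed
next
  case (nd_boxE w'' w \<Gamma> A C)
  have u: "R\<^sup>*\<^sup>* u w" using nd_boxE by auto
  have q: "Q w \<Gamma> \<Gamma>'" using mono nd_boxE by blast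
  show ?case
  proof (rule nd_step.nd_boxE[OF nd_boxE(1)])
    show "nd_step R P' \<Gamma>' (UBox A) w" using nd_boxE u q by blast
    show "(\<forall>w'. R w w' \<longrightarrow> P' \<Gamma>' A w') \<longrightarrow> nd_step R P' \<Gamma>' C w''"
      using nd_boxE upper[OF q u] by blast
  qed
qed

lemma nd_step_later_iff:
  assumes "R\<^sup>*\<^sup>* w v" shows "nd_step R (nd_later w) \<Gamma> A v \<longleftrightarrow> ND R \<Gamma> A v"
proof
  assume "nd_step R (nd_later w) \<Gamma> A v"
  then show "ND R \<Gamma> A v" unfolding ND_unfold
    by (rule nd_step_simulate[where u=v and Q="\<lambda>_. (=)"])
       (auto simp: nd_later_def intro: nd_hyp rtranclp_tranclp_tranclp[OF assms] rtranclp_into_tranclp1)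
next
  assume "ND R \<Gamma> A v"
  then show "nd_step R (nd_later w) \<Gamma> A v" unfolding ND_unfold
    by (rule nd_step_simulate[where u=v and Q="\<lambda>_. (=)"])
       (auto simp: nd_later_def intro: nd_hyp rtranclp_into_tranclp1)
qed

definition agree_from :: "'w \<Rightarrow> ('b \<times> 'w) list \<Rightarrow> ('b \<times> 'w) list \<Rightarrow> bool" where
  "agree_from y \<Gamma> \<Gamma>' \<longleftrightarrow> (\<forall>B z. R\<^sup>*\<^sup>* y z \<longrightarrow> ((B, z) \<in> set \<Gamma> \<longleftrightarrow> (B, z) \<in> set \<Gamma>'))"

lemma agree_from_sym: "agree_from y \<Gamma> \<Gamma>' \<Longrightarrow> agree_from y \<Gamma>' \<Gamma>"
  by (auto simp: agree_from_def)

lemma agree_from_mono: "agree_from y \<Gamma> \<Gamma>' \<Longrightarrow> R\<^sup>*\<^sup>* y z \<Longrightarrow> agree_from z \<Gamma> \<Gamma>'"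
  unfolding agree_from_def by (meson rtranclp_trans)

lemma agree_from_Cons: "agree_from y \<Gamma> \<Gamma>' \<Longrightarrow> agree_from y ((B, x) # \<Gamma>) ((B, x) # \<Gamma>')"
  by (auto simp: agree_from_def)

lemma agree_from_set_eq: "set \<Gamma> = set \<Gamma>' \<Longrightarrow> agree_from z \<Gamma> \<Gamma>'"
  unfolding agree_from_def by auto

lemma agree_from_Cons_unreachable: "\<not> R\<^sup>*\<^sup>* z w \<Longrightarrow> agree_from z \<Gamma> ((A, w) # \<Gamma>)"
  unfolding agree_from_def by auto

lemma ND_agree_from:
  fixes \<Gamma> \<Gamma>' :: "('a, 'w) uctx"
  shows "agree_from u \<Gamma> \<Gamma>' \<Longrightarrow> ND R \<Gamma> A u \<Longrightarrow> ND R \<Gamma>' A u"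
proof (induction u arbitrary: \<Gamma> \<Gamma>' A rule: later_induct)
  case (1 u)
  have upper: "nd_later u a B y"
    if "agree_from x a b" "R\<^sup>*\<^sup>* u x" "R x y" "nd_later u b B y"
    for x y and a b :: "('a, 'w) uctx" and B
  proof -
    have uy: "R\<^sup>+\<^sup>+ u y" using that(2,3) by (rule rtranclp_into_tranclp1)
    have "agree_from y b a" using that(1,3) agree_from_sym agree_from_mono by blast
    then show ?thesis using 1(1)[OF uy] that(4) uy unfolding nd_later_def by blast
  qed
  have hyp: "nd_step R (nd_later u) b B x" if "agree_from x a b" "(B, x) \<in> set a"
    for x and a b :: "('a, 'w) uctx" and B
    using that by (auto simp: agree_from_def intro: nd_hyp)
  show ?case using 1(3) unfolding ND_unfold
    by (rule nd_step_simulate[where u=u and Q=agree_from, OF _ _ 1(2) agree_from_mono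
          agree_from_Cons hyp upper]) simp_all
qed

lemma ND_agree_from_iff: "agree_from u \<Gamma> \<Gamma>' \<Longrightarrow> ND R \<Gamma> A u \<longleftrightarrow> ND R \<Gamma>' A u"
  using ND_agree_from agree_from_sym by blast

lemma ND_Cons_unreachable_iff: "\<not> R\<^sup>*\<^sup>* y w \<Longrightarrow> ND R ((A, w) # \<Gamma>) B y \<longleftrightarrow> ND R \<Gamma> B y"
  using ND_agree_from_iff[OF agree_from_Cons_unreachable] by blast

lemma ND_Cons_weaken:
  fixes \<Gamma> :: "('a, 'w) uctx"
  assumes "\<not> R\<^sup>+\<^sup>+ u z" "ND R \<Gamma> A u" shows "ND R ((B, z) # \<Gamma>) A u"
proof -
  define Q where "Q = (\<lambda>(x::'w) (a::('a, 'w) uctx) b. set b = insert (B, z) (set a))"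
  have upper: "nd_later u a B' y" if "Q x a b" "R\<^sup>*\<^sup>* u x" "R x y" "nd_later u b B' y"
    for x y and a b :: "('a, 'w) uctx" and B'
  proof -
    have uy: "R\<^sup>+\<^sup>+ u y" using that(2,3) by (rule rtranclp_into_tranclp1)
    then have "\<not> R\<^sup>*\<^sup>* y z" using assms(1) by (meson tranclp_rtranclp_tranclp)
    then have "agree_from y b a" using that(1) unfolding agree_from_def Q_def by auto
    then show ?thesis using that(4) uy ND_agree_from unfolding nd_later_def by blast
  qed
  show ?thesis using assms(2) unfolding ND_unfold
    by (rule nd_step_simulate[where u=u and Q=Q, OF _ _ _ _ _ _ upper])
       (auto simp: Q_def intro: nd_hyp)
qed

lemma ND_Cons_elim_step:
  fixes \<Gamma> :: "('a, 'w) uctx"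
  assumes later: "\<And>z \<Gamma>' B'. R\<^sup>+\<^sup>+ y z \<Longrightarrow> (R\<^sup>*\<^sup>* z w1 \<longrightarrow> ND R \<Gamma>' A w1)
      \<Longrightarrow> ND R \<Gamma>' B' z \<longleftrightarrow> ND R ((A, w1) # \<Gamma>') B' z"
    and "ND R \<Gamma> A w1" "ND R ((A, w1) # \<Gamma>) B y"
  shows "ND R \<Gamma> B y"
proof -
  define Q where "Q = (\<lambda>x (a::('a, 'w) uctx) b.
    set a = insert (A, w1) (set b) \<and> (R\<^sup>*\<^sup>* x w1 \<longrightarrow> ND R b A w1))"
  have mono: "Q x' a b" if "Q x a b" "R\<^sup>*\<^sup>* x x'" for x x' a b
    using that by (auto simp: Q_def intro: rtranclp_trans)
  have Cons: "Q x ((B', x) # a) ((B', x) # b)" if "Q x a b" "R\<^sup>*\<^sup>* y x" for x a b B'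
    using that(1) by (auto simp: Q_def intro!: ND_Cons_weaken dest: later_not_back)
  have hyp: "nd_step R (nd_later y) b B' x" if "Q x a b" "R\<^sup>*\<^sup>* y x" "(B', x) \<in> set a" for x a b B'
  proof (cases "(B', x) = (A, w1)")
    case True
    then show ?thesis using that nd_step_later_iff by (auto simp: Q_def)
  qed (use that in \<open>auto simp: Q_def intro: nd_hyp\<close>)
  have upper: "nd_later y a B' z" if "Q x a b" "R\<^sup>*\<^sup>* y x" "R x z" "nd_later y b B' z" for x a b B' z
  proof -
    have yz: "R\<^sup>+\<^sup>+ y z" using that(2,3) by (rule rtranclp_into_tranclp1)
    have "R\<^sup>*\<^sup>* z w1 \<longrightarrow> ND R b A w1"
      using that(1,3) converse_rtranclp_into_rtranclp[of R] by (auto simp: Q_def)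
    then have "ND R ((A, w1) # b) B' z" using later[OF yz] that(4) by (auto simp: nd_later_def)
    moreover have "agree_from z ((A, w1) # b) a" using that(1) by (intro agree_from_set_eq) (auto simp: Q_def)
    ultimately show ?thesis using yz ND_agree_from by (auto simp: nd_later_def)
  qed
  have "Q y ((A, w1) # \<Gamma>) \<Gamma>" using assms(2) by (simp add: Q_def)
  then show ?thesis using assms(3) unfolding ND_unfold
    by (intro nd_step_simulate[where u=y and Q=Q, OF _ _ _ mono Cons hyp upper]) simp_all
qed

lemma ND_Cons_intro_step:
  fixes \<Gamma> :: "('a, 'w) uctx"
  assumes later: "\<And>z \<Gamma>' B'. R\<^sup>+\<^sup>+ y z \<Longrightarrow> (R\<^sup>*\<^sup>* z w1 \<longrightarrow> ND R \<Gamma>' A w1)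
      \<Longrightarrow> ND R \<Gamma>' B' z \<longleftrightarrow> ND R ((A, w1) # \<Gamma>') B' z"
    and "ND R \<Gamma> A w1" "ND R \<Gamma> B y"
  shows "ND R ((A, w1) # \<Gamma>) B y"
proof -
  define Q where "Q = (\<lambda>x (a::('a, 'w) uctx) b.
    set b = insert (A, w1) (set a) \<and> (R\<^sup>*\<^sup>* x w1 \<longrightarrow> ND R a A w1))"
  have mono: "Q x' a b" if "Q x a b" "R\<^sup>*\<^sup>* x x'" for x x' a b
    using that by (auto simp: Q_def intro: rtranclp_trans)
  have Cons: "Q x ((B', x) # a) ((B', x) # b)" if "Q x a b" "R\<^sup>*\<^sup>* y x" for x a b B'
    using that(1) by (auto simp: Q_def intro!: ND_Cons_weaken dest: later_not_back)
  have hyp: "nd_step R (nd_later y) b B' x" if "Q x a b" "R\<^sup>*\<^sup>* y x" "(B', x) \<in> set a" for x a b B'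
    using that(1,3) by (auto simp: Q_def intro: nd_hyp)
  have upper: "nd_later y a B' z" if "Q x a b" "R\<^sup>*\<^sup>* y x" "R x z" "nd_later y b B' z" for x a b B' z
  proof -
    have yz: "R\<^sup>+\<^sup>+ y z" using that(2,3) by (rule rtranclp_into_tranclp1)
    have "R\<^sup>*\<^sup>* z w1 \<longrightarrow> ND R a A w1"
      using that(1,3) converse_rtranclp_into_rtranclp[of R] by (auto simp: Q_def)
    moreover have "agree_from z b ((A, w1) # a)" using that(1) by (intro agree_from_set_eq) (auto simp: Q_def)
    then have "ND R ((A, w1) # a) B' z" using that(4) ND_agree_from by (auto simp: nd_later_def)
    ultimately show ?thesis using later[OF yz] yz by (auto simp: nd_later_def)
  qed
  have "Q y \<Gamma> ((A, w1) # \<Gamma>)" using assms(2) by (simp add: Q_def)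
  then show ?thesis using assms(3) unfolding ND_unfold
    by (intro nd_step_simulate[where u=y and Q=Q, OF _ _ _ mono Cons hyp upper]) simp_all
qed

text \<open>Neither direction holds for arbitrary hypotheses: they change what is
  derivable at later worlds, and those judgments occur negatively in the
  modal elimination rules.\<close>

lemma ND_cut:
  fixes \<Gamma> :: "('a, 'w) uctx"
  assumes "ND R \<Gamma> A w1" shows "ND R ((A, w1) # \<Gamma>) B y \<longleftrightarrow> ND R \<Gamma> B y"
  using assms
proof (induction y arbitrary: \<Gamma> B rule: later_induct)
  case (1 y)
  have later: "ND R \<Gamma>' B' z \<longleftrightarrow> ND R ((A, w1) # \<Gamma>') B' z"
    if "R\<^sup>+\<^sup>+ y z" "R\<^sup>*\<^sup>* z w1 \<longrightarrow> ND R \<Gamma>' A w1" for z and \<Gamma>' :: "('a, 'w) uctx" and B'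
    using 1(1)[OF that(1)] that(2) ND_Cons_unreachable_iff by blast
  show ?case using ND_Cons_elim_step[OF later] ND_Cons_intro_step[OF later] 1(2) by blast
qed

lemma ND_hyp: "(A, w) \<in> set \<Gamma> \<Longrightarrow> ND R \<Gamma> A w"
  by (simp add: ND_unfold nd_hyp)

lemma ND_impI: "ND R ((A, w) # \<Gamma>) B w \<Longrightarrow> ND R \<Gamma> (UImp A B) w"
  by (simp add: ND_unfold) (rule nd_impI)

lemma ND_impE: "ND R \<Gamma> (UImp A B) w \<Longrightarrow> ND R \<Gamma> A w \<Longrightarrow> ND R \<Gamma> B w"
  by (simp add: ND_unfold) (rule nd_impE)

lemma ND_botE: "R\<^sup>*\<^sup>* w' w \<Longrightarrow> ND R \<Gamma> UBot w \<Longrightarrow> ND R \<Gamma> C w'"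
  unfolding ND_unfold[of \<Gamma> C w'] by (rule nd_botE) (auto intro: nd_step_later_iff[THEN iffD2])

lemma ND_diaI: "R w w' \<Longrightarrow> ND R \<Gamma> A w' \<Longrightarrow> ND R \<Gamma> (UDia A) w"
  unfolding ND_unfold[of \<Gamma> "UDia A" w] by (rule nd_diaI) (auto intro: nd_step_later_iff[THEN iffD2])

lemma ND_boxI: "(\<And>w'. R w w' \<Longrightarrow> ND R \<Gamma> A w') \<Longrightarrow> ND R \<Gamma> (UBox A) w"
  unfolding ND_unfold[of \<Gamma> "UBox A" w] by (rule nd_boxI) (auto intro: nd_step_later_iff[THEN iffD2])

lemma ND_diaE:
  assumes "R\<^sup>*\<^sup>* w'' w" "ND R \<Gamma> (UDia A) w" "\<And>w'. R w w' \<Longrightarrow> ND R \<Gamma> A w' \<Longrightarrow> ND R \<Gamma> C w''"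
  shows "ND R \<Gamma> C w''"
proof -
  have "nd_step R (nd_later w'') \<Gamma> (UDia A) w" using assms(1,2) nd_step_later_iff by blast
  moreover have "\<forall>w'. R w w' \<longrightarrow> nd_later w'' \<Gamma> A w' \<longrightarrow> ND R \<Gamma> C w''"
    using assms(3) by (auto simp: nd_later_def)
  ultimately show ?thesis unfolding ND_unfold[of \<Gamma> C w''] by (rule nd_diaE[OF assms(1)])
qed

lemma ND_boxE:
  assumes "R\<^sup>*\<^sup>* w'' w" "ND R \<Gamma> (UBox A) w" "(\<And>w'. R w w' \<Longrightarrow> ND R \<Gamma> A w') \<Longrightarrow> ND R \<Gamma> C w''"
  shows "ND R \<Gamma> C w''"
proof -
  have "nd_step R (nd_later w'') \<Gamma> (UBox A) w" using assms(1,2) nd_step_later_iff by blast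
  moreover have "(\<forall>w'. R w w' \<longrightarrow> nd_later w'' \<Gamma> A w') \<longrightarrow> ND R \<Gamma> C w''"
    using assms(3) by (auto simp: nd_later_def)
  ultimately show ?thesis unfolding ND_unfold[of \<Gamma> C w''] by (rule nd_boxE[OF assms(1)])
qed

lemma ND_dia_bot: "ND R \<Gamma> (UDia A) w \<Longrightarrow> \<not> (\<exists>w'. R w w' \<and> ND R \<Gamma> A w') \<Longrightarrow> ND R \<Gamma> UBot w"
  by (rule ND_diaE[of w w]) auto

lemma ND_box_bot: "ND R \<Gamma> (UBox A) w \<Longrightarrow> \<not> (\<forall>w'. R w w' \<longrightarrow> ND R \<Gamma> A w') \<Longrightarrow> ND R \<Gamma> UBot w"
  by (rule ND_boxE[of w w]) auto

definition finv_later :: "'w \<Rightarrow> ('a, 'w) pctx \<Rightarrow> 'a pneg \<Rightarrow> 'w \<Rightarrow> bool" where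
  "finv_later w = (\<lambda>\<Gamma> C v. R\<^sup>+\<^sup>+ w v \<and> FInv R \<Gamma> C v)"

lemma FInv_unfold: "FInv R \<Gamma> C w = finv R (finv_later w) \<Gamma> None C w"
proof -
  have eq: "foc_world R w = (\<lambda>\<Gamma> C. finv R (\<lambda>\<Gamma>' C' v. R\<^sup>+\<^sup>+ w v \<and> foc_world R v \<Gamma>' C') \<Gamma> None C w)"
    unfolding foc_world_def
    by (subst wfrec[OF wf_later_rel]) (simp add: cut_def later_rel_def cong: conj_cong)
  show ?thesis unfolding FInv_def finv_later_def by (simp only: eq)
qed

lemma focused_simulate:
  assumes upper: "\<And>\<Gamma> B y. R\<^sup>+\<^sup>+ u y \<Longrightarrow> P' \<Gamma> B y \<Longrightarrow> P \<Gamma> B y"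
  shows "rfoc R P \<Gamma> A x \<Longrightarrow> R\<^sup>*\<^sup>* u x \<Longrightarrow> rfoc R P' \<Gamma> A x"
    and "finv R P \<Gamma> \<Omega> C x \<Longrightarrow> R\<^sup>*\<^sup>* u x \<Longrightarrow> (\<forall>A w'. \<Omega> = Some (A, w') \<longrightarrow> R\<^sup>*\<^sup>* u w')
         \<Longrightarrow> finv R P' \<Gamma> \<Omega> C x"
    and "lfoc R P \<Gamma> F C x \<Longrightarrow> R\<^sup>*\<^sup>* u x \<Longrightarrow> R\<^sup>*\<^sup>* u (snd F) \<Longrightarrow> lfoc R P' \<Gamma> F C x"
proof (induction rule: rfoc_finv_lfoc.inducts)
  case (DiaR w w' \<Gamma> A)
  have "R\<^sup>*\<^sup>* u w'" using DiaR by (meson rtranclp.rtrancl_into_rtrancl)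
  then have f: "finv R P' \<Gamma> None (Up A) w'" using DiaR by simp
  show ?case using DiaR(1) f by (rule rfoc_finv_lfoc.DiaR)
next
  case (BoxR w \<Gamma> A)
  have "\<forall>w'. R w w' \<longrightarrow> finv R P' \<Gamma> None (Up A) w'"
  proof (intro allI impI)
    fix w' assume "R w w'"
    then have "R\<^sup>*\<^sup>* u w'" using BoxR by (meson rtranclp.rtrancl_into_rtrancl)
    then show "finv R P' \<Gamma> None (Up A) w'" using BoxR \<open>R w w'\<close> by simp
  qed
  then show ?case by (rule rfoc_finv_lfoc.BoxR)
next
  case (DownL C w w' A \<Gamma>)
  have "R\<^sup>*\<^sup>* u w'" using DownL by (meson rtranclp_trans)
  then have l: "lfoc R P' \<Gamma> (A, w') C w" using DownL by simp
  show ?case by (rule rfoc_finv_lfoc.DownL) (use DownL l in auto)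
next
  case (DiaL w' \<Gamma> A C w'')
  have "\<forall>w. R w' w \<longrightarrow> P' \<Gamma> (Up A) w \<longrightarrow> finv R P' \<Gamma> None C w''"
  proof (intro allI impI)
    fix w assume "R w' w" "P' \<Gamma> (Up A) w"
    moreover have "R\<^sup>*\<^sup>* u w'" using DiaL(3) by simp
    then have "R\<^sup>+\<^sup>+ u w" using \<open>R w' w\<close> by (simp add: rtranclp_into_tranclp1)
    ultimately show "finv R P' \<Gamma> None C w''" using DiaL upper by blast
  qed
  then show ?case by (rule rfoc_finv_lfoc.DiaL)
next
  case (BoxL w' \<Gamma> A C w'')
  have "(\<forall>w. R w' w \<longrightarrow> P' \<Gamma> (Up A) w) \<longrightarrow> finv R P' \<Gamma> None C w''"
  proof
    assume a: "\<forall>w. R w' w \<longrightarrow> P' \<Gamma> (Up A) w"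
    have "R\<^sup>*\<^sup>* u w'" using BoxL(3) by simp
    then have "\<forall>w. R w' w \<longrightarrow> P \<Gamma> (Up A) w"
      using a upper by (meson rtranclp_into_tranclp1)
    then show "finv R P' \<Gamma> None C w''" using BoxL by blast
  qed
  then show ?case by (rule rfoc_finv_lfoc.BoxL)
qed (auto intro: rfoc_finv_lfoc.intros)

lemma finv_later_iff:
  assumes "R\<^sup>*\<^sup>* w v" shows "finv R (finv_later w) \<Gamma> None C v \<longleftrightarrow> FInv R \<Gamma> C v"
  unfolding FInv_unfold
  by (rule iffI; rule focused_simulate(2)[where u=v])
     (auto simp: finv_later_def intro: rtranclp_tranclp_tranclp[OF assms])

definition later_truths :: "'w \<Rightarrow> ('a, 'w) uctx \<Rightarrow> ('a ppos \<Rightarrow> bool) \<Rightarrow> ('a ppos \<Rightarrow> bool) \<Rightarrow> bool" where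
  "later_truths x \<Delta> dia box \<longleftrightarrow> (\<forall>A. dia (polp A) \<longleftrightarrow> (\<exists>y. R x y \<and> ND R \<Delta> A y)) \<and>
                                 (\<forall>A. box (polp A) \<longleftrightarrow> (\<forall>y. R x y \<longrightarrow> ND R \<Delta> A y))"

definition later_inconsistent :: "'w \<Rightarrow> ('a, 'w) uctx \<Rightarrow> bool" where
  "later_inconsistent x \<Delta> \<longleftrightarrow> (\<exists>u. R\<^sup>+\<^sup>+ x u \<and> ND R \<Delta> UBot u)"

definition later_equiv :: "'w \<Rightarrow> ('a, 'w) uctx \<Rightarrow> ('a, 'w) uctx \<Rightarrow> bool" where
  "later_equiv x \<Delta> \<Delta>' \<longleftrightarrow> (\<forall>A y. R\<^sup>+\<^sup>+ x y \<longrightarrow> (ND R \<Delta> A y \<longleftrightarrow> ND R \<Delta>' A y))"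

lemma later_truths_cong: "later_truths x \<Delta> dia box \<Longrightarrow> later_equiv x \<Delta> \<Delta>' \<Longrightarrow> later_truths x \<Delta>' dia box"
  unfolding later_truths_def later_equiv_def by (meson tranclp.r_into_trancl)

lemma later_inconsistent_cong: "later_equiv x \<Delta> \<Delta>' \<Longrightarrow> later_inconsistent x \<Delta> \<longleftrightarrow> later_inconsistent x \<Delta>'"
  unfolding later_inconsistent_def later_equiv_def by blast

lemma later_equiv_Cons_here: "later_equiv x \<Delta> ((B, x) # \<Delta>)"
  unfolding later_equiv_def using later_not_back ND_Cons_unreachable_iff by blast

lemma later_equiv_Cons_derivable: "ND R \<Delta> B w \<Longrightarrow> later_equiv x \<Delta> ((B, w) # \<Delta>)"
  unfolding later_equiv_def using ND_cut by blast

lemma later_inconsistent_ND: "later_inconsistent x \<Delta> \<Longrightarrow> ND R \<Delta> C x"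
  unfolding later_inconsistent_def by (auto intro: ND_botE tranclp_into_rtranclp)

section \<open>The induction step at a world\<close>

context
  fixes x :: 'w and dia box :: "'a ppos \<Rightarrow> bool"
begin

abbreviation lpos :: "'a ppos \<Rightarrow> 'a lpos" where "lpos \<equiv> loc_pos dia box"
abbreviation lneg :: "'a pneg \<Rightarrow> 'a lneg" where "lneg \<equiv> loc_neg dia box"
abbreviation lctx :: "('a, 'w) uctx \<Rightarrow> 'a lpos list" where "lctx \<equiv> loc_ctx dia box x"

text \<open>Inconsistency at a later world makes everything derivable at \<open>x\<close> in both
  systems, so it is carried along as an alternative to a local derivation.\<close>

abbreviation loc_deriv :: "('a, 'w) uctx \<Rightarrow> 'a lpos option \<Rightarrow> 'a lneg \<Rightarrow> bool" where
  "loc_deriv \<Delta> Om C \<equiv> later_inconsistent x \<Delta> \<or> lfinv (lctx \<Delta>) Om C"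

lemma later_inconsistentI: "R\<^sup>+\<^sup>+ x w \<Longrightarrow> ND R \<Delta> UBot w \<Longrightarrow> later_inconsistent x \<Delta>"
  unfolding later_inconsistent_def by blast

text \<open>A hypothesis \<open>A\<close> at world \<open>w\<close>: at \<open>x\<close> it stays in the local
  context, at a strictly later world it may be assumed derivable, and at any
  other world it is irrelevant.\<close>

abbreviation loc_deriv_with :: "('a, 'w) uctx \<Rightarrow> 'a uprop \<Rightarrow> 'w \<Rightarrow> 'a lneg \<Rightarrow> bool" where
  "loc_deriv_with \<Delta> A w C \<equiv> (w = x \<longrightarrow> loc_deriv \<Delta> (Some (lpos (polp A))) C) \<and>
                              (R\<^sup>+\<^sup>+ x w \<longrightarrow> ND R \<Delta> A w \<longrightarrow> loc_deriv \<Delta> None C)"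

abbreviation loc_lfoc_with :: "('a, 'w) uctx \<Rightarrow> 'a uprop \<Rightarrow> 'w \<Rightarrow> 'a lneg \<Rightarrow> bool" where
  "loc_lfoc_with \<Delta> A w C \<equiv> (w = x \<longrightarrow> later_inconsistent x \<Delta> \<or> llfoc (lctx \<Delta>) (lneg (poln A)) C) \<and>
                              (R\<^sup>+\<^sup>+ x w \<longrightarrow> ND R \<Delta> A w \<longrightarrow> loc_deriv \<Delta> None C)"

lemma loc_deriv_with_cut:
  assumes "loc_deriv_with \<Delta> A w C" "R\<^sup>*\<^sup>* x w"
    and "w = x \<Longrightarrow> loc_deriv \<Delta> None (LUp (lpos (polp A)))" "R\<^sup>+\<^sup>+ x w \<Longrightarrow> ND R \<Delta> A w"
  shows "loc_deriv \<Delta> None C"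
proof (cases "w = x")
  case True
  then show ?thesis using assms(1,3) lfinv_cut_up by blast
next
  case False
  then show ?thesis using assms(1,2,4) rtranclp_neq_tranclp by blast
qed

lemma loc_deriv_with_stable:
  assumes "stable_pos (polp A)" "later_truths x \<Delta> dia box"
    and "\<And>\<Delta>'. polc \<Delta>' = (polp A, w) # polc \<Delta> \<Longrightarrow> later_truths x \<Delta>' dia box \<Longrightarrow> loc_deriv \<Delta>' None C"
  shows "loc_deriv_with \<Delta> A w C"
proof -
  have ih: "loc_deriv ((A, w) # \<Delta>) None C" if "later_equiv x \<Delta> ((A, w) # \<Delta>)"
    using assms(3) later_truths_cong[OF assms(2) that] polc_elem_polp[OF assms(1)]
    by (simp add: polc_Cons)
  show ?thesis
  proof (intro conjI impI)
    assume "w = x"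
    then have eq: "later_equiv x \<Delta> ((A, w) # \<Delta>)" using later_equiv_Cons_here by simp
    then show "loc_deriv \<Delta> (Some (lpos (polp A))) C"
      using ih later_inconsistent_cong[OF eq] \<open>w = x\<close> polc_elem_polp[OF assms(1)] assms(1)
      by (auto simp: loc_ctx_Cons_same intro: lL)
  next
    assume "R\<^sup>+\<^sup>+ x w" "ND R \<Delta> A w"
    then have eq: "later_equiv x \<Delta> ((A, w) # \<Delta>)" by (intro later_equiv_Cons_derivable)
    have "w \<noteq> x" using \<open>R\<^sup>+\<^sup>+ x w\<close> later_not_back by blast
    then show "loc_deriv \<Delta> None C"
      using ih[OF eq] later_inconsistent_cong[OF eq] by (simp add: loc_ctx_Cons_other)
  qed
qed

lemma loc_deriv_with_UDia:
  assumes "later_truths x \<Delta> dia box"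
    and minor: "\<And>y. R w y \<Longrightarrow> R\<^sup>+\<^sup>+ x y \<Longrightarrow> ND R \<Delta> A y \<Longrightarrow> loc_deriv \<Delta> None C"
  shows "loc_deriv_with \<Delta> (UDia A) w C"
proof (intro conjI impI)
  assume "w = x"
  show "loc_deriv \<Delta> (Some (lpos (polp (UDia A)))) C"
  proof (cases "dia (polp A)")
    case True
    then obtain y where "R x y" "ND R \<Delta> A y" using assms(1) unfolding later_truths_def by blast
    then have "loc_deriv \<Delta> None C" using minor \<open>w = x\<close> by blast
    then show ?thesis using True by (auto intro: lTopL)
  qed (simp add: lBotL)
next
  assume "R\<^sup>+\<^sup>+ x w" "ND R \<Delta> (UDia A) w"
  show "loc_deriv \<Delta> None C"
  proof (cases "\<exists>y. R w y \<and> ND R \<Delta> A y")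
    case True
    then show ?thesis using minor \<open>R\<^sup>+\<^sup>+ x w\<close> by (meson tranclp.trancl_into_trancl)
  next
    case False
    then have "ND R \<Delta> UBot w" using \<open>ND R \<Delta> (UDia A) w\<close> ND_dia_bot by blast
    then show ?thesis using \<open>R\<^sup>+\<^sup>+ x w\<close> by (blast intro: later_inconsistentI)
  qed
qed

lemma loc_deriv_with_UBox:
  assumes "later_truths x \<Delta> dia box"
    and minor: "R\<^sup>*\<^sup>* x w \<Longrightarrow> \<forall>y. R w y \<longrightarrow> ND R \<Delta> A y \<Longrightarrow> loc_deriv \<Delta> None C"
  shows "loc_deriv_with \<Delta> (UBox A) w C"
proof (intro conjI impI)
  assume "w = x"
  show "loc_deriv \<Delta> (Some (lpos (polp (UBox A)))) C"
  proof (cases "box (polp A)")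
    case True
    then have "\<forall>y. R x y \<longrightarrow> ND R \<Delta> A y" using assms(1) unfolding later_truths_def by blast
    then have "loc_deriv \<Delta> None C" using minor \<open>w = x\<close> by blast
    then show ?thesis using True by (auto intro: lTopL)
  qed (simp add: lBotL)
next
  assume "R\<^sup>+\<^sup>+ x w" "ND R \<Delta> (UBox A) w"
  show "loc_deriv \<Delta> None C"
  proof (cases "\<forall>y. R w y \<longrightarrow> ND R \<Delta> A y")
    case True
    then show ?thesis using minor[OF tranclp_into_rtranclp[OF \<open>R\<^sup>+\<^sup>+ x w\<close>]] by blast
  next
    case False
    then have "ND R \<Delta> UBot w" using \<open>ND R \<Delta> (UBox A) w\<close> ND_box_bot by blast
    then show ?thesis using \<open>R\<^sup>+\<^sup>+ x w\<close> by (blast intro: later_inconsistentI)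
  qed
qed

lemma loc_lfoc_with_UImp:
  assumes "w = x \<Longrightarrow> later_inconsistent x \<Delta> \<or> lrfoc (lctx \<Delta>) (lpos (polp A1))"
    and "R\<^sup>+\<^sup>+ x w \<Longrightarrow> ND R \<Delta> A1 w" and "loc_lfoc_with \<Delta> A2 w C"
  shows "loc_lfoc_with \<Delta> (UImp A1 A2) w C"
  using assms ND_impE by (auto intro: lImpL)

lemma nd_step_loc_deriv:
  assumes "nd_step R (nd_later x) \<Delta> B w" "w = x" "later_truths x \<Delta> dia box"
  shows "loc_deriv \<Delta> None (lneg (poln B))"
  using assms
proof (induction rule: nd_step.induct)
  case (nd_hyp A w \<Gamma>)
  then show ?case by (auto intro!: lfinv_hyp simp: loc_ctx_mem)
next
  case (nd_botE w' w \<Gamma> C)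
  show ?case
  proof (cases "w = x")
    case True
    then have "loc_deriv \<Gamma> None (LUp LBot)" using nd_botE by simp
    then show ?thesis using lfinv_explode by blast
  next
    case False
    then have "R\<^sup>+\<^sup>+ x w" using nd_botE rtranclp_neq_tranclp by blast
    moreover have "ND R \<Gamma> UBot w" using nd_botE nd_step_later_iff by blast
    ultimately show ?thesis by (blast intro: later_inconsistentI)
  qed
next
  case (nd_impI A w \<Gamma> B)
  have eq: "later_equiv x \<Gamma> ((A, x) # \<Gamma>)" by (rule later_equiv_Cons_here)
  then have "loc_deriv ((A, x) # \<Gamma>) None (lneg (poln B))"
    using nd_impI later_truths_cong by blast
  then show ?case using nd_impI later_inconsistent_cong[OF eq]
    by (auto simp: loc_ctx_Cons_same intro: lfinv_impI)
next
  case (nd_impE \<Gamma> A B w)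
  then show ?case using lfinv_impE by fastforce
next
  case (nd_diaI w w' \<Gamma> A)
  then have "dia (polp A)" using nd_step_later_iff unfolding later_truths_def by blast
  then show ?case by (auto intro: lUpR lTopR)
next
  case (nd_boxI w \<Gamma> A)
  then have "box (polp A)" using nd_step_later_iff unfolding later_truths_def by blast
  then show ?case by (auto intro: lUpR lTopR)
next
  case (nd_diaE w'' w \<Gamma> A C)
  have "loc_deriv_with \<Gamma> (UDia A) w (lneg (poln C))"
  proof (rule loc_deriv_with_UDia)
    show "later_truths x \<Gamma> dia box" using nd_diaE by simp
    show "loc_deriv \<Gamma> None (lneg (poln C))" if "R w y" "R\<^sup>+\<^sup>+ x y" "ND R \<Gamma> A y" for y
      using nd_diaE that by (auto simp: nd_later_def)
  qed
  then show ?case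
  proof (rule loc_deriv_with_cut)
    show "R\<^sup>*\<^sup>* x w" using nd_diaE by simp
    show "loc_deriv \<Gamma> None (LUp (lpos (polp (UDia A))))" if "w = x" using nd_diaE that by simp
    show "ND R \<Gamma> (UDia A) w" if "R\<^sup>+\<^sup>+ x w" using nd_diaE nd_step_later_iff by blast
  qed
next
  case (nd_boxE w'' w \<Gamma> A C)
  have "loc_deriv_with \<Gamma> (UBox A) w (lneg (poln C))"
  proof (rule loc_deriv_with_UBox)
    show "later_truths x \<Gamma> dia box" using nd_boxE by simp
    show "loc_deriv \<Gamma> None (lneg (poln C))" if "R\<^sup>*\<^sup>* x w" "\<forall>y. R w y \<longrightarrow> ND R \<Gamma> A y"
    proof -
      have "\<forall>y. R w y \<longrightarrow> nd_later x \<Gamma> A y"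
        using that by (auto simp: nd_later_def intro: rtranclp_into_tranclp1)
      then show ?thesis using nd_boxE by simp
    qed
  qed
  then show ?case
  proof (rule loc_deriv_with_cut)
    show "R\<^sup>*\<^sup>* x w" using nd_boxE by simp
    show "loc_deriv \<Gamma> None (LUp (lpos (polp (UBox A))))" if "w = x" using nd_boxE that by simp
    show "ND R \<Gamma> (UBox A) w" if "R\<^sup>+\<^sup>+ x w" using nd_boxE nd_step_later_iff by blast
  qed
qed

lemma ND_locally_true:
  assumes "lpos (polp B) = LTop" "later_truths x \<Delta> dia box" shows "ND R \<Delta> B x"
  using loc_pos_polp_LTopD[OF assms(1)] assms(2) unfolding later_truths_def
  by (auto intro: ND_diaI ND_boxI)

lemma ND_Cons_locally_false:
  assumes "lpos (polp A) = LBot" "later_truths x \<Delta> dia box" shows "ND R ((A, x) # \<Delta>) B x"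
proof -
  have later: "ND R ((A, x) # \<Delta>) A' y \<longleftrightarrow> ND R \<Delta> A' y" if "R x y" for A' y
    using later_equiv_Cons_here that unfolding later_equiv_def by blast
  have hyp: "ND R ((A, x) # \<Delta>) A x" by (simp add: ND_hyp)
  from loc_pos_polp_LBotD[OF assms(1)] show ?thesis
  proof (elim disjE exE conjE)
    assume "A = UBot"
    then show ?thesis using hyp by (auto intro: ND_botE)
  next
    fix A' assume "A = UDia A'" "\<not> dia (polp A')"
    then show ?thesis using hyp later assms(2) unfolding later_truths_def
      by (auto intro: ND_diaE[of x x])
  next
    fix A' assume "A = UBox A'" "\<not> box (polp A')"
    then show ?thesis using hyp later assms(2) unfolding later_truths_def
      by (auto intro: ND_boxE[of x x])
  qed
qed

abbreviation loc_goal :: "'a uprop \<Rightarrow> 'a lneg \<Rightarrow> bool" where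
  "loc_goal B c \<equiv> c = lneg (poln B) \<or> c = LUp (lpos (polp B))"

lemma local_ND:
  shows "lrfoc G a \<Longrightarrow> \<forall>\<Delta> B. G = lctx \<Delta> \<longrightarrow> later_truths x \<Delta> dia box \<longrightarrow>
           a = lpos (polp B) \<longrightarrow> ND R \<Delta> B x"
    and "lfinv G Om c \<Longrightarrow> \<forall>\<Delta> B. G = lctx \<Delta> \<longrightarrow> later_truths x \<Delta> dia box \<longrightarrow> loc_goal B c \<longrightarrow>
           (case Om of None \<Rightarrow> ND R \<Delta> B x
            | Some a \<Rightarrow> \<forall>A. a = lpos (polp A) \<longrightarrow> ND R ((A, x) # \<Delta>) B x)"
    and "llfoc G n c \<Longrightarrow> \<forall>\<Delta> A B. G = lctx \<Delta> \<longrightarrow> later_truths x \<Delta> dia box \<longrightarrow>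
           n = lneg (poln A) \<longrightarrow> loc_goal B c \<longrightarrow> ND R \<Delta> A x \<longrightarrow> ND R \<Delta> B x"
proof (induction rule: local_induct)
  case (lQR q G)
  show ?case
  proof (intro allI impI)
    fix \<Delta> B assume a: "G = lctx \<Delta>" "LQ q = lpos (polp B)"
    obtain B' where "(B', x) \<in> set \<Delta>" "LQ q = lpos (polc_elem B')"
      using lQR a(1) loc_ctx_mem by metis
    then have "(PAtom q, x) \<in> set \<Delta>" using loc_pos_polc_LQD by metis
    then show "ND R \<Delta> B x" using loc_pos_polp_LQD[OF a(2)[symmetric]] by (simp add: ND_hyp)
  qed
next
  case (lDownR G N)
  then show ?case by (auto dest!: loc_pos_polp_LDownD[OF sym])
next
  case (lTopR G)
  then show ?case using ND_locally_true by auto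
next
  case (lImpR G A B)
  show ?case
  proof (intro allI impI)
    fix \<Delta> B0 assume a: "G = lctx \<Delta>" "later_truths x \<Delta> dia box" "loc_goal B0 (LImp A B)"
    then obtain B1 B2 where b: "B0 = UImp B1 B2" "A = lpos (polp B1)" "B = lneg (poln B2)"
      using loc_neg_poln_LImpD[of dia box B0 A B] by auto
    then have "ND R ((B1, x) # \<Delta>) B2 x" using lImpR a by auto
    then show "case None of None \<Rightarrow> ND R \<Delta> B0 x | Some a \<Rightarrow> \<forall>A. a = lpos (polp A) \<longrightarrow> ND R ((A, x) # \<Delta>) B0 x"
      using b ND_impI by simp
  qed
next
  case (lL A G C)
  show ?case
  proof (intro allI impI, unfold option.case, intro allI impI)
    fix \<Delta> B A' assume a: "G = lctx \<Delta>" "later_truths x \<Delta> dia box" "loc_goal B C" "A = lpos (polp A')"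
    have "polc_elem A' = polp A'" using lL(1) a(4) by (intro polc_elem_polp) simp
    then have "A # G = lctx ((A', x) # \<Delta>)" using a(1,4) by (simp add: loc_ctx_Cons_same)
    moreover have "later_truths x ((A', x) # \<Delta>) dia box"
      using later_truths_cong[OF a(2) later_equiv_Cons_here] .
    ultimately show "ND R ((A', x) # \<Delta>) B x" using lL(3) a(3) by auto
  qed
next
  case (lDownL C N G)
  show ?case
  proof (intro allI impI, unfold option.case)
    fix \<Delta> B assume a: "G = lctx \<Delta>" "later_truths x \<Delta> dia box" "loc_goal B C"
    obtain B' where b: "(B', x) \<in> set \<Delta>" "LDown N = lpos (polc_elem B')"
      using lDownL(2) a(1) loc_ctx_mem by metis
    then have "N = lneg (poln B')" using loc_pos_polc_LDownD by metis
    moreover have "ND R \<Delta> B' x" using b ND_hyp by blast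
    ultimately show "ND R \<Delta> B x" using lDownL(4) a by blast
  qed
next
  case (lBotL G C)
  then show ?case using ND_Cons_locally_false by auto
next
  case (lTopL G C)
  show ?case
  proof (intro allI impI, unfold option.case, intro allI impI)
    fix \<Delta> B A assume "G = lctx \<Delta>" "later_truths x \<Delta> dia box" "loc_goal B C"
    then have "ND R \<Delta> B x" using lTopL by auto
    moreover have "\<not> R\<^sup>+\<^sup>+ x x" using later_not_back by blast
    ultimately show "ND R ((A, x) # \<Delta>) B x" by (simp add: ND_Cons_weaken)
  qed
next
  case (lUpR G A)
  then show ?case by (auto dest: loc_neg_poln_LUpD[OF sym])
next
  case (lQL G q)
  then show ?case by (auto dest!: loc_neg_poln_LNQD[OF sym])
next
  case (lUpL G A C)
  show ?case
  proof (intro allI impI)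
    fix \<Delta> A0 B assume a: "G = lctx \<Delta>" "later_truths x \<Delta> dia box" "LUp A = lneg (poln A0)"
      "loc_goal B C" "ND R \<Delta> A0 x"
    have "A = lpos (polp A0)" using loc_neg_poln_LUpD a(3) by metis
    then have "ND R ((A0, x) # \<Delta>) B x" using lUpL a by auto
    then show "ND R \<Delta> B x" using ND_cut[OF a(5)] by blast
  qed
next
  case (lImpL G A B C)
  show ?case
  proof (intro allI impI)
    fix \<Delta> A0 B0 assume a: "G = lctx \<Delta>" "later_truths x \<Delta> dia box" "LImp A B = lneg (poln A0)"
      "loc_goal B0 C" "ND R \<Delta> A0 x"
    obtain A1 A2 where b: "A0 = UImp A1 A2" "A = lpos (polp A1)" "B = lneg (poln A2)"
      using loc_neg_poln_LImpD[OF a(3)[symmetric]] by blast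
    have "ND R \<Delta> A1 x" using lImpL a b by auto
    then have "ND R \<Delta> A2 x" using a(5) b ND_impE by blast
    then show "ND R \<Delta> B0 x" using lImpL a b by auto
  qed
qed

context
  assumes later_correct: "\<And>y (\<Delta> :: ('a, 'w) uctx) B. R\<^sup>+\<^sup>+ x y \<Longrightarrow>
    (FInv R (polc \<Delta>) (poln B) y \<longleftrightarrow> ND R \<Delta> B y) \<and> (FInv R (polc \<Delta>) (Up (polp B)) y \<longleftrightarrow> ND R \<Delta> B y)"
begin

lemma finv_later_Up_iff:
  fixes \<Delta> :: "('a, 'w) uctx"
  shows "R x y \<Longrightarrow> finv_later x (polc \<Delta>) (Up (polp A)) y \<longleftrightarrow> ND R \<Delta> A y"
  using later_correct[of y \<Delta> A] unfolding finv_later_def by auto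

lemma finv_Up_at_successor:
  fixes \<Delta> :: "('a, 'w) uctx"
  assumes "R x y" "ND R \<Delta> A y" shows "finv R (finv_later x) (polc \<Delta>) None (Up (polp A)) y"
proof -
  have xy: "R\<^sup>+\<^sup>+ x y" using assms(1) by simp
  then have "FInv R (polc \<Delta>) (Up (polp A)) y" using later_correct assms(2) by blast
  then show ?thesis by (rule finv_later_iff[OF tranclp_into_rtranclp[OF xy], THEN iffD2])
qed

lemma rfoc_locally_true:
  assumes "lpos (polp B) = LTop" "later_truths x \<Delta> dia box"
  shows "rfoc R (finv_later x) (polc \<Delta>) (polp B) x"
  using loc_pos_polp_LTopD[OF assms(1)]
proof (elim disjE exE conjE)
  fix A assume "B = UDia A" "dia (polp A)"
  then obtain y where "R x y" "ND R \<Delta> A y" using assms(2) unfolding later_truths_def by blast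
  then show ?thesis using DiaR[OF \<open>R x y\<close> finv_Up_at_successor] \<open>B = UDia A\<close> by simp
next
  fix A assume "B = UBox A" "box (polp A)"
  then have "\<forall>y. R x y \<longrightarrow> ND R \<Delta> A y" using assms(2) unfolding later_truths_def by blast
  then show ?thesis using \<open>B = UBox A\<close> by (simp add: BoxR finv_Up_at_successor)
qed

lemma finv_locally_false:
  assumes "lpos (polp A) = LBot" "later_truths x \<Delta> dia box"
  shows "finv R (finv_later x) (polc \<Delta>) (Some (polp A, x)) c x"
  using loc_pos_polp_LBotD[OF assms(1)]
proof (elim disjE exE conjE)
  assume "A = UBot" then show ?thesis by (simp add: BotL)
next
  fix A' assume A: "A = UDia A'" "\<not> dia (polp A')"
  then have "\<not> finv_later x (polc \<Delta>) (Up (polp A')) y" if "R x y" for y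
    using that assms(2) finv_later_Up_iff unfolding later_truths_def by blast
  then show ?thesis using A by (simp add: DiaL)
next
  fix A' assume A: "A = UBox A'" "\<not> box (polp A')"
  then have "\<not> (\<forall>y. R x y \<longrightarrow> finv_later x (polc \<Delta>) (Up (polp A')) y)"
    using assms(2) finv_later_Up_iff unfolding later_truths_def by blast
  then show ?thesis unfolding A(1) polp.simps by (blast intro: BoxL)
qed

lemma local_focused:
  shows "lrfoc G s \<Longrightarrow> \<forall>\<Delta> B. G = lctx \<Delta> \<longrightarrow> later_truths x \<Delta> dia box \<longrightarrow>
           s = lpos (polp B) \<longrightarrow> rfoc R (finv_later x) (polc \<Delta>) (polp B) x"
    and "lfinv G Om t \<Longrightarrow> \<forall>\<Delta> c. G = lctx \<Delta> \<longrightarrow> later_truths x \<Delta> dia box \<longrightarrow> pol_goal c \<longrightarrow> t = lneg c \<longrightarrow>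
           (case Om of None \<Rightarrow> finv R (finv_later x) (polc \<Delta>) None c x
            | Some s \<Rightarrow> \<forall>A. s = lpos (polp A) \<longrightarrow> finv R (finv_later x) (polc \<Delta>) (Some (polp A, x)) c x)"
    and "llfoc G n t \<Longrightarrow> \<forall>\<Delta> A c. G = lctx \<Delta> \<longrightarrow> later_truths x \<Delta> dia box \<longrightarrow> pol_goal c \<longrightarrow>
           n = lneg (poln A) \<longrightarrow> t = lneg c \<longrightarrow> lfoc R (finv_later x) (polc \<Delta>) (poln A, x) c x"
proof (induction rule: local_induct)
  case (lQR q G)
  show ?case
  proof (intro allI impI)
    fix \<Delta> B assume a: "G = lctx \<Delta>" "later_truths x \<Delta> dia box" "LQ q = lpos (polp B)"
    obtain B' where "(B', x) \<in> set \<Delta>" "LQ q = lpos (polc_elem B')"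
      using lQR a(1) loc_ctx_mem by metis
    then have "(PAtom q, x) \<in> set \<Delta>" using loc_pos_polc_LQD by metis
    then have "(PQ q, x) \<in> set (polc \<Delta>)" unfolding polc_mem by force
    then show "rfoc R (finv_later x) (polc \<Delta>) (polp B) x"
      using loc_pos_polp_LQD[OF a(3)[symmetric]] by (simp add: QR)
  qed
next
  case (lDownR G N)
  show ?case
  proof (intro allI impI)
    fix \<Delta> B
    assume a: "G = lctx \<Delta>" "later_truths x \<Delta> dia box" "LDown N = lpos (polp B)"
    have b: "polp B = Down (poln B)" "N = lneg (poln B)" using loc_pos_polp_LDownD[OF a(3)[symmetric]] by auto
    have "finv R (finv_later x) (polc \<Delta>) None (poln B) x" using lDownR a b pol_goal_poln by auto
    then show "rfoc R (finv_later x) (polc \<Delta>) (polp B) x" using b by (simp add: DownR)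
  qed
next
  case (lTopR G)
  then show ?case using rfoc_locally_true by auto
next
  case (lImpR G A B)
  show ?case
  proof (simp only: option.case, intro allI impI)
    fix \<Delta> c
    assume a: "G = lctx \<Delta>" "later_truths x \<Delta> dia box" "pol_goal c" "LImp A B = lneg c"
    obtain B1 B2 where b: "c = PImp (polp B1) (poln B2)" "A = lpos (polp B1)" "B = lneg (poln B2)"
      using pol_goal_LImpD[OF a(3) a(4)[symmetric]] by blast
    have "finv R (finv_later x) (polc \<Delta>) (Some (polp B1, x)) (poln B2) x"
      using lImpR a b pol_goal_poln by auto
    then show "finv R (finv_later x) (polc \<Delta>) None c x" using b by (simp add: ImpR)
  qed
next
  case (lL A G C)
  show ?case
  proof (intro allI impI, unfold option.case, intro allI impI)
    fix \<Delta> c A' assume a: "G = lctx \<Delta>" "later_truths x \<Delta> dia box" "pol_goal c" "C = lneg c"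
      "A = lpos (polp A')"
    have st: "stable_pos (polp A')" using lL(1) a(5) by simp
    then have pe: "polc_elem A' = polp A'" by (rule polc_elem_polp)
    then have "A # G = lctx ((A', x) # \<Delta>)" using a(1,5) by (simp add: loc_ctx_Cons_same)
    moreover have "later_truths x ((A', x) # \<Delta>) dia box"
      using later_truths_cong[OF a(2) later_equiv_Cons_here] .
    ultimately have "finv R (finv_later x) (polc ((A', x) # \<Delta>)) None c x" using lL(3) a(3,4) by auto
    then have "finv R (finv_later x) ((polp A', x) # polc \<Delta>) None c x" using pe by (simp add: polc_Cons)
    then show "finv R (finv_later x) (polc \<Delta>) (Some (polp A', x)) c x" by (rule L[OF st])
  qed
next
  case (lDownL C N G)
  show ?case
  proof (intro allI impI, unfold option.case)
    fix \<Delta> c assume a: "G = lctx \<Delta>" "later_truths x \<Delta> dia box" "pol_goal c" "C = lneg c"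
    obtain B' where b: "(B', x) \<in> set \<Delta>" "LDown N = lpos (polc_elem B')"
      using lDownL(2) a(1) loc_ctx_mem by metis
    have c: "polc_elem B' = Down (poln B')" "N = lneg (poln B')"
      using loc_pos_polc_LDownD[OF b(2)[symmetric]] by auto
    have "lfoc R (finv_later x) (polc \<Delta>) (poln B', x) c x" using lDownL(4) a c by auto
    moreover have "(Down (poln B'), x) \<in> set (polc \<Delta>)" using b c unfolding polc_mem by metis
    moreover have "stable_neg c" using lDownL(1) a(4) by simp
    ultimately show "finv R (finv_later x) (polc \<Delta>) None c x" by (intro DownL) auto
  qed
next
  case (lBotL G C)
  then show ?case using finv_locally_false by auto
next
  case (lTopL G C)
  show ?case
  proof (simp only: option.case, intro allI impI)
    fix \<Delta> c A
    assume a: "G = lctx \<Delta>" "later_truths x \<Delta> dia box" "pol_goal c" "C = lneg c" "LTop = lpos (polp A)"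
    have f: "finv R (finv_later x) (polc \<Delta>) None c x" using lTopL a by auto
    from loc_pos_polp_LTopD[OF a(5)[symmetric]]
    show "finv R (finv_later x) (polc \<Delta>) (Some (polp A, x)) c x"
    proof (elim disjE exE conjE)
      fix A' assume "A = UDia A'"
      then show ?thesis using f by (simp add: DiaL)
    next
      fix A' assume "A = UBox A'"
      then show ?thesis using f by (simp add: BoxL)
    qed
  qed
next
  case (lUpR G A)
  show ?case
  proof (simp only: option.case, intro allI impI)
    fix \<Delta> c
    assume a: "G = lctx \<Delta>" "later_truths x \<Delta> dia box" "pol_goal c" "LUp A = lneg c"
    obtain B where b: "c = Up (polp B)" "A = lpos (polp B)" using pol_goal_LUpD[OF a(3) a(4)[symmetric]] by blast
    have "rfoc R (finv_later x) (polc \<Delta>) (polp B) x" using lUpR a b by auto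
    then show "finv R (finv_later x) (polc \<Delta>) None c x" using b by (simp add: UpR)
  qed
next
  case (lQL G q)
  show ?case
  proof (intro allI impI)
    fix \<Delta> A c
    assume a: "G = lctx \<Delta>" "later_truths x \<Delta> dia box" "pol_goal c" "LNQ q = lneg (poln A)" "LNQ q = lneg c"
    have "A = NAtom q" by (rule loc_neg_poln_LNQD[OF a(4)[symmetric]])
    moreover have "c = NQ q" by (rule pol_goal_LNQD[OF a(3) a(5)[symmetric]])
    ultimately show "lfoc R (finv_later x) (polc \<Delta>) (poln A, x) c x" by (simp add: QL)
  qed
next
  case (lUpL G A C)
  show ?case
  proof (intro allI impI)
    fix \<Delta> A0 c
    assume a: "G = lctx \<Delta>" "later_truths x \<Delta> dia box" "pol_goal c" "LUp A = lneg (poln A0)" "C = lneg c"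
    have b: "poln A0 = Up (polp A0)" "A = lpos (polp A0)" using loc_neg_poln_LUpD[OF a(4)[symmetric]] by auto
    have "finv R (finv_later x) (polc \<Delta>) (Some (polp A0, x)) c x" using lUpL a b by auto
    then show "lfoc R (finv_later x) (polc \<Delta>) (poln A0, x) c x" using b by (simp add: UpL)
  qed
next
  case (lImpL G A B C)
  show ?case
  proof (intro allI impI)
    fix \<Delta> A0 c assume a: "G = lctx \<Delta>" "later_truths x \<Delta> dia box" "pol_goal c"
      "LImp A B = lneg (poln A0)" "C = lneg c"
    obtain A1 A2 where b: "A0 = UImp A1 A2" "A = lpos (polp A1)" "B = lneg (poln A2)"
      using loc_neg_poln_LImpD[OF a(4)[symmetric]] by blast
    have "rfoc R (finv_later x) (polc \<Delta>) (polp A1) x" "lfoc R (finv_later x) (polc \<Delta>) (poln A2, x) c x"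
      using lImpL a b by auto
    then show "lfoc R (finv_later x) (polc \<Delta>) (poln A0, x) c x" using b by (simp add: ImpL)
  qed
qed

lemma focused_loc_deriv:
  shows "rfoc R (finv_later x) \<Gamma> a z \<Longrightarrow> z = x \<Longrightarrow> \<forall>\<Delta> B. \<Gamma> = polc \<Delta> \<longrightarrow> later_truths x \<Delta> dia box \<longrightarrow>
           a = polp B \<longrightarrow> later_inconsistent x \<Delta> \<or> lrfoc (lctx \<Delta>) (lpos a)"
    and "finv R (finv_later x) \<Gamma> Om c z \<Longrightarrow> z = x \<Longrightarrow> \<forall>\<Delta>. \<Gamma> = polc \<Delta> \<longrightarrow> later_truths x \<Delta> dia box \<longrightarrow>
           pol_goal c \<longrightarrow>
           (case Om of None \<Rightarrow> loc_deriv \<Delta> None (lneg c)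
            | Some (a, w) \<Rightarrow> \<forall>A. a = polp A \<longrightarrow> loc_deriv_with \<Delta> A w (lneg c))"
    and "lfoc R (finv_later x) \<Gamma> F c z \<Longrightarrow> z = x \<Longrightarrow> \<forall>\<Delta> A. \<Gamma> = polc \<Delta> \<longrightarrow> later_truths x \<Delta> dia box \<longrightarrow>
           pol_goal c \<longrightarrow> fst F = poln A \<longrightarrow> loc_lfoc_with \<Delta> A (snd F) (lneg c)"
proof (induction rule: rfoc_finv_lfoc.inducts)
  case (QR q w \<Gamma>)
  show ?case
  proof (intro allI impI)
    fix \<Delta> B assume a: "\<Gamma> = polc \<Delta>" "later_truths x \<Delta> dia box" "PQ q = polp B"
    obtain B' where "(B', x) \<in> set \<Delta>" "PQ q = polc_elem B'"
      using QR a(1) polc_mem by metis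
    then have "(PAtom q, x) \<in> set \<Delta>" using polc_elem_eq_PQ by metis
    then have "LQ q \<in> set (lctx \<Delta>)" unfolding loc_ctx_mem by force
    then show "later_inconsistent x \<Delta> \<or> lrfoc (lctx \<Delta>) (lpos (PQ q))" by (simp add: lQR)
  qed
next
  case (DownR \<Gamma> A w)
  show ?case
  proof (intro allI impI)
    fix \<Delta> B assume a: "\<Gamma> = polc \<Delta>" "later_truths x \<Delta> dia box" "Down A = polp B"
    have "A = poln B" using polp_DownD a(3)[symmetric] by blast
    then have "loc_deriv \<Delta> None (lneg A)" using DownR(2)[OF DownR(3), rule_format, OF a(1,2)] by simp
    then show "later_inconsistent x \<Delta> \<or> lrfoc (lctx \<Delta>) (lpos (Down A))" by (auto intro: lDownR)
  qed
next
  case (DiaR w w' \<Gamma> A)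
  show ?case
  proof (intro allI impI)
    fix \<Delta> B assume a: "\<Gamma> = polc \<Delta>" "later_truths x \<Delta> dia box" "PDia A = polp B"
    obtain A1 where b: "B = UDia A1" "A = polp A1" using polp_PDiaD a(3)[symmetric] by blast
    have "R x w'" using DiaR by simp
    then have xw: "R\<^sup>+\<^sup>+ x w'" by simp
    have "FInv R (polc \<Delta>) (Up (polp A1)) w'"
      using DiaR a b finv_later_iff[OF tranclp_into_rtranclp[OF xw], THEN iffD1] by simp
    then have "ND R \<Delta> A1 w'" using later_correct[OF xw] by blast
    with \<open>R x w'\<close> have "dia (polp A1)" using a(2) unfolding later_truths_def by blast
    then show "later_inconsistent x \<Delta> \<or> lrfoc (lctx \<Delta>) (lpos (PDia A))" using b by (simp add: lTopR)
  qed
next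
  case (BoxR w \<Gamma> A)
  show ?case
  proof (intro allI impI)
    fix \<Delta> B assume a: "\<Gamma> = polc \<Delta>" "later_truths x \<Delta> dia box" "PBox A = polp B"
    obtain A1 where b: "B = UBox A1" "A = polp A1" using polp_PBoxD a(3)[symmetric] by blast
    have "ND R \<Delta> A1 w'" if "R x w'" for w'
    proof -
      have xw: "R\<^sup>+\<^sup>+ x w'" using that by simp
      have "finv R (finv_later x) (polc \<Delta>) None (Up (polp A1)) w'" using BoxR a b that by auto
      then have "FInv R (polc \<Delta>) (Up (polp A1)) w'"
        by (rule finv_later_iff[OF tranclp_into_rtranclp[OF xw], THEN iffD1])
      then show ?thesis using later_correct[OF xw] by blast
    qed
    then have "box (polp A1)" using a(2) unfolding later_truths_def by blast
    then show "later_inconsistent x \<Delta> \<or> lrfoc (lctx \<Delta>) (lpos (PBox A))" using b by (simp add: lTopR)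
  qed
next
  case (ImpR \<Gamma> A w B)
  then show ?case by (fastforce dest!: pol_goal_PImpD intro: lImpR)
next
  case (L A w' \<Gamma> C w)
  show ?case
  proof (intro allI impI, unfold option.case prod.case, intro allI impI)
    fix \<Delta> A0 assume a: "\<Gamma> = polc \<Delta>" "later_truths x \<Delta> dia box" "pol_goal C" "A = polp A0"
    show "loc_deriv_with \<Delta> A0 w' (lneg C)"
    proof (rule loc_deriv_with_stable[OF _ a(2)])
      show "stable_pos (polp A0)" using L(1) a(4) by simp
      show "loc_deriv \<Delta>' None (lneg C)"
        if "polc \<Delta>' = (polp A0, w') # polc \<Delta>" "later_truths x \<Delta>' dia box" for \<Delta>'
        using L(3)[OF L(4), rule_format, of \<Delta>'] that a by simp
    qed
  qed
next
  case (DownL C w w' A \<Gamma>)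
  show ?case
  proof (intro allI impI, unfold option.case)
    fix \<Delta> assume a: "\<Gamma> = polc \<Delta>" "later_truths x \<Delta> dia box" "pol_goal C"
    have "(Down A, w') \<in> set (polc \<Delta>)" using DownL.hyps a(1) by blast
    then obtain B where b: "(B, w') \<in> set \<Delta>" "Down A = polc_elem B"
      unfolding polc_mem by blast
    have "A = poln B" using polc_elem_DownD b(2)[symmetric] by blast
    then have ih: "loc_lfoc_with \<Delta> B w' (lneg C)"
      using DownL(5)[OF DownL(6), rule_format, of \<Delta> B] a by simp
    show "loc_deriv \<Delta> None (lneg C)"
    proof (cases "w' = x")
      case True
      then have "LDown (lneg (poln B)) \<in> set (lctx \<Delta>)"
        using b \<open>A = poln B\<close> unfolding loc_ctx_mem by (metis loc_pos.simps(2))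
      moreover have "lstable_neg (lneg C)" using DownL(1) by simp
      ultimately show ?thesis using ih True by (auto intro: lDownL)
    next
      case False
      moreover have "R\<^sup>*\<^sup>* x w'" using DownL(3,6) by simp
      ultimately have "R\<^sup>+\<^sup>+ x w'" using rtranclp_neq_tranclp by blast
      then show ?thesis using ih ND_hyp[OF b(1)] by blast
    qed
  qed
next
  case (BotL \<Gamma> w' C w)
  then show ?case by (auto intro: lBotL later_inconsistentI dest!: polp_PBotD[OF sym])
next
  case (DiaL w' \<Gamma> A C w'')
  show ?case
  proof (intro allI impI, unfold option.case prod.case, intro allI impI)
    fix \<Delta> A0 assume a: "\<Gamma> = polc \<Delta>" "later_truths x \<Delta> dia box" "pol_goal C" "PDia A = polp A0"
    obtain A1 where b: "A0 = UDia A1" "A = polp A1" using polp_PDiaD a(4)[symmetric] by blast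
    have "loc_deriv_with \<Delta> (UDia A1) w' (lneg C)"
    proof (rule loc_deriv_with_UDia[OF a(2)])
      fix y assume "R w' y" "R\<^sup>+\<^sup>+ x y" "ND R \<Delta> A1 y"
      then have "finv_later x \<Gamma> (Up A) y" using later_correct a(1) b(2) by (simp add: finv_later_def)
      then show "loc_deriv \<Delta> None (lneg C)" using DiaL(1) \<open>R w' y\<close> DiaL(2) a by auto
    qed
    then show "loc_deriv_with \<Delta> A0 w' (lneg C)" using b(1) by simp
  qed
next
  case (BoxL w' \<Gamma> A C w'')
  show ?case
  proof (intro allI impI, unfold option.case prod.case, intro allI impI)
    fix \<Delta> A0 assume a: "\<Gamma> = polc \<Delta>" "later_truths x \<Delta> dia box" "pol_goal C" "PBox A = polp A0"
    obtain A1 where b: "A0 = UBox A1" "A = polp A1" using polp_PBoxD a(4)[symmetric] by blast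
    have "loc_deriv_with \<Delta> (UBox A1) w' (lneg C)"
    proof (rule loc_deriv_with_UBox[OF a(2)])
      assume xw': "R\<^sup>*\<^sup>* x w'" and nd: "\<forall>y. R w' y \<longrightarrow> ND R \<Delta> A1 y"
      have "\<forall>y. R w' y \<longrightarrow> finv_later x \<Gamma> (Up A) y"
      proof (intro allI impI)
        fix y assume "R w' y"
        with xw' have xy: "R\<^sup>+\<^sup>+ x y" by (rule rtranclp_into_tranclp1)
        then show "finv_later x \<Gamma> (Up A) y"
          using later_correct[OF xy] nd \<open>R w' y\<close> a(1) b(2) by (simp add: finv_later_def)
      qed
      then show "loc_deriv \<Delta> None (lneg C)" using BoxL(1) BoxL(2) a by auto
    qed
    then show "loc_deriv_with \<Delta> A0 w' (lneg C)" using b(1) by simp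
  qed
next
  case (UpR \<Gamma> A w)
  then show ?case by (auto dest!: pol_goal_UpD intro: lUpR)
next
  case (QL \<Gamma> q w)
  have "\<not> R\<^sup>+\<^sup>+ x x" using later_not_back by blast
  then show ?case using QL by (simp add: lQL NQ_eq_poln_iff)
next
  case (UpL \<Gamma> A w' C w)
  show ?case
  proof (intro allI impI, unfold fst_conv snd_conv)
    fix \<Delta> A0 assume a: "\<Gamma> = polc \<Delta>" "later_truths x \<Delta> dia box" "pol_goal C" "Up A = poln A0"
    have A: "A = polp A0" using poln_UpD a(4)[symmetric] by blast
    then have "loc_deriv_with \<Delta> A0 w' (lneg C)"
      using UpL(2)[OF UpL(3), rule_format, OF a(1-3)] by auto
    then show "loc_lfoc_with \<Delta> A0 w' (lneg C)" by (auto simp: A simp flip: a(4) intro: lUpL)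
  qed
next
  case (ImpL \<Gamma> A w' B C w)
  show ?case
  proof (intro allI impI, unfold fst_conv snd_conv)
    fix \<Delta> A0 assume a: "\<Gamma> = polc \<Delta>" "later_truths x \<Delta> dia box" "pol_goal C" "PImp A B = poln A0"
    obtain A1 A2 where b: "A0 = UImp A1 A2" "A = polp A1" "B = poln A2"
      using poln_PImpD a(4)[symmetric] by blast
    show "loc_lfoc_with \<Delta> A0 w' (lneg C)" unfolding b(1)
    proof (rule loc_lfoc_with_UImp)
      show "later_inconsistent x \<Delta> \<or> lrfoc (lctx \<Delta>) (lpos (polp A1))" if "w' = x"
        using ImpL(2)[rule_format, of \<Delta> A1] that a b by simp
      show "ND R \<Delta> A1 w'" if xw: "R\<^sup>+\<^sup>+ x w'"
      proof -
        have "finv R (finv_later x) \<Gamma> None (Up A) w'" using ImpL(1) by (rule UpR)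
        then have "FInv R \<Gamma> (Up A) w'" by (rule finv_later_iff[OF tranclp_into_rtranclp[OF xw], THEN iffD1])
        then show ?thesis using later_correct[OF xw, of \<Delta> A1] a(1) b(2) by simp
      qed
      show "loc_lfoc_with \<Delta> A2 w' (lneg C)"
        using ImpL(4)[OF ImpL(5), rule_format, of \<Delta> A2] a b by simp
    qed
  qed
qed

lemma finv_later_inconsistent_stable:
  fixes \<Delta> :: "('a, 'w) uctx"
  assumes "later_inconsistent x \<Delta>" "stable_neg c"
  shows "finv R (finv_later x) (polc \<Delta>) None c x"
proof -
  obtain u where u: "R\<^sup>+\<^sup>+ x u" "ND R \<Delta> UBot u" using assms(1) unfolding later_inconsistent_def by blast
  have "FInv R (polc \<Delta>) (Up PBot) u" using later_correct[OF u(1), of \<Delta> UBot] u(2) by simp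
  then have "finv R (finv_later x) (polc \<Delta>) None (Up PBot) u"
    by (rule finv_later_iff[OF tranclp_into_rtranclp[OF u(1)], THEN iffD2])
  then show ?thesis using finv_Up_PBot_explode(2) u(1) assms(2) tranclp_into_rtranclp by fastforce
qed

lemma finv_later_inconsistent_poln:
  fixes \<Delta> :: "('a, 'w) uctx"
  shows "later_inconsistent x \<Delta> \<Longrightarrow> finv R (finv_later x) (polc \<Delta>) None (poln B) x"
proof (induction B arbitrary: \<Delta>)
  case (UImp B1 B2)
  have "finv R (finv_later x) (polc \<Delta>) (Some (polp B1, x)) (poln B2) x"
  proof (cases "stable_pos (polp B1)")
    case True
    have "later_inconsistent x ((B1, x) # \<Delta>)"
      using UImp.prems later_inconsistent_cong[OF later_equiv_Cons_here] by blast
    then have "finv R (finv_later x) (polc ((B1, x) # \<Delta>)) None (poln B2) x" by (rule UImp.IH(2))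
    then have "finv R (finv_later x) ((polp B1, x) # polc \<Delta>) None (poln B2) x"
      using polc_elem_polp[OF True] by (simp add: polc_Cons)
    then show ?thesis by (rule L[OF True])
  next
    case False
    then show ?thesis using UImp.IH(2) UImp.prems by (cases B1) (simp_all add: BotL DiaL BoxL)
  qed
  then show ?case by (simp add: ImpR)
qed (auto intro: finv_later_inconsistent_stable)

lemma FInv_loc_deriv:
  assumes "FInv R (polc \<Delta>) c x" "pol_goal c" "later_truths x \<Delta> dia box"
  shows "loc_deriv \<Delta> None (lneg c)"
  using focused_loc_deriv(2)[OF assms(1)[unfolded FInv_unfold] refl] assms(2,3) by simp

lemma loc_deriv_FInv:
  assumes "loc_deriv \<Delta> None (lneg c)" "pol_goal c" "later_truths x \<Delta> dia box"
  shows "FInv R (polc \<Delta>) c x"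
  using assms(1) unfolding FInv_unfold
proof
  assume inc: "later_inconsistent x \<Delta>"
  from assms(2) show "finv R (finv_later x) (polc \<Delta>) None c x"
    unfolding pol_goal_def
  proof (elim disjE exE)
    fix B assume "c = poln B"
    then show ?thesis using finv_later_inconsistent_poln[OF inc] by simp
  next
    fix B assume "c = Up (polp B)"
    then show ?thesis using finv_later_inconsistent_stable[OF inc] by simp
  qed
next
  assume "lfinv (lctx \<Delta>) None (lneg c)"
  from local_focused(2)[OF this, rule_format, OF refl assms(3,2) refl]
  show "finv R (finv_later x) (polc \<Delta>) None c x" by simp
qed

end

lemma loc_deriv_ND:
  assumes "loc_deriv \<Delta> None c" "loc_goal B c" "later_truths x \<Delta> dia box"
  shows "ND R \<Delta> B x"
  using assms(1)
proof
  assume "lfinv (lctx \<Delta>) None c"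
  from local_ND(2)[OF this, rule_format, OF refl assms(3,2)] show ?thesis by simp
qed (rule later_inconsistent_ND)

lemma ND_loc_deriv:
  assumes "ND R \<Delta> B x" "later_truths x \<Delta> dia box"
  shows "loc_deriv \<Delta> None (lneg (poln B))"
  using nd_step_loc_deriv assms ND_unfold by blast

end

lemma FInv_iff_ND:
  fixes \<Delta> :: "('a, 'w) uctx"
  shows "(FInv R (polc \<Delta>) (poln B) x \<longleftrightarrow> ND R \<Delta> B x) \<and>
         (FInv R (polc \<Delta>) (Up (polp B)) x \<longleftrightarrow> ND R \<Delta> B x)"
proof (induction x arbitrary: \<Delta> B rule: later_induct)
  case (1 x)
  define dia where "dia = (\<lambda>a. \<exists>A. a = polp A \<and> (\<exists>y. R x y \<and> ND R \<Delta> A y))"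
  define box where "box = (\<lambda>a. \<exists>A. a = polp A \<and> (\<forall>y. R x y \<longrightarrow> ND R \<Delta> A y))"
  have truths: "later_truths x \<Delta> dia box"
    unfolding later_truths_def dia_def box_def using polp_inj by blast
  note to_loc = FInv_loc_deriv[OF 1 _ _ truths] and from_loc = loc_deriv_FInv[OF 1 _ _ truths]
  have "FInv R (polc \<Delta>) (poln B) x \<longleftrightarrow> ND R \<Delta> B x"
    using to_loc[of "poln B"] from_loc[of "poln B"] ND_loc_deriv[OF _ truths]
      loc_deriv_ND[OF _ _ truths] by auto
  moreover have "FInv R (polc \<Delta>) (Up (polp B)) x \<longleftrightarrow> ND R \<Delta> B x"
    using to_loc[of "Up (polp B)"] from_loc[of "Up (polp B)"] ND_loc_deriv[OF _ truths]
      loc_deriv_ND[OF _ _ truths] lfinv_shift by fastforce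
  ultimately show ?case ..
qed

end

theorem theorem5:
  fixes R :: "'w \<Rightarrow> 'w \<Rightarrow> bool"
    and \<Gamma> :: "('a, 'w) uctx" and A :: "'a uprop" and w :: 'w
  assumes "wfP (\<lambda>x y. R y x)"
  shows "ND R \<Gamma> A w \<longleftrightarrow> FInv R (polc \<Gamma>) (poln A) w"
  using FInv_iff_ND[OF assms] by blast

end
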